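(* Let $\mathcal{D}[t]\subset\mathcal{H}\subset\mathcal{D}^\times[t^\times]$ be a rigged Hilbert space, let $\{\xi_n\}$ be a Schauder basis for $\mathcal{D}[t]$, and let $\{\zeta_n\}\subset\mathcal{D}^\times$ be the sequence of coefficient functionals, i.e. the unique elements with $f=\sum_{n=1}^\infty\overline{\langle\zeta_n,f\rangle}\xi_n$ for all $f\in\mathcal{D}$. Then: (i) $\{\zeta_n\}$ is complete (its linear span is dense) in $\mathcal{D}^\times[\tau]$, where $\tau$ is any topology of the conjugate dual pair $(\mathcal{D}^\times,\mathcal{D})$ (i.e. compatible with this duality); if $\mathcal{D}[t]$ is reflexive, $\{\zeta_n\}$ is complete also with respect to $t^\times$. (ii) $\{\zeta_n\}$ is a basis for $\mathcal{D}^\times$ with respect to the weak topology: for every $\Psi\in\mathcal{D}^\times$, $$\langle\Psi,f\rangle=\sum_{k=1}^\infty\langle\Psi,\xi_k\rangle\langle\zeta_k,f\rangle,\quad\forall f\in\mathcal{D}.$$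
   Context: A rigged Hilbert space $\mathcal{D}[t]\subset\mathcal{H}\subset\mathcal{D}^\times[t^\times]$ consists of a dense subspace $\mathcal{D}$ of a Hilbert space $\mathcal{H}$ endowed with a locally convex topology $t$ finer than the topology induced by the Hilbert norm, and the space $\mathcal{D}^\times$ of all continuous conjugate-linear functionals on $\mathcal{D}[t]$, endowed with the strong dual topology $t^\times=\beta(\mathcal{D}^\times,\mathcal{D})$; $\mathcal{H}$ is identified with a subspace of $\mathcal{D}^\times$ and the duality form $\langle\Phi,f\rangle$ ($\Phi\in\mathcal{D}^\times$, $f\in\mathcal{D}$; the value of $\Phi$ at $f$) extends the inner product of $\mathcal{H}$. A Schauder basis of $\mathcal{D}[t]$ is a sequence $\{\xi_n\}$ such that every $\phi\in\mathcal{D}$ has a unique expansion $\phi=\sum c_n(\phi)\xi_n$ converging in $\mathcal{D}[t]$ with each coefficient functional $c_n$ $t$-continuous; then $c_n(f)=\overline{\langle\zeta_n,f\rangle}$ for a unique $\zeta_n\in\mathcal{D}^\times$. *)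

theory Defs
  imports "HOL-Analysis.Analysis"
begin

text \<open>A complex vector space is modelled by a type 'a :: ab_group_add together with a
  scalar multiplication sc :: complex => 'a => 'a satisfying vector_space sc.
  The Hilbert space H is the whole type 'a with inner product ip (linear in the first,
  conjugate-linear in the second argument).\<close>

definition complex_inner_product :: "(complex \<Rightarrow> 'a \<Rightarrow> 'a) \<Rightarrow> ('a::ab_group_add \<Rightarrow> 'a \<Rightarrow> complex) \<Rightarrow> bool" where
  "complex_inner_product sc ip \<longleftrightarrow>
     (\<forall>x y z. ip (x + y) z = ip x z + ip y z) \<and>
     (\<forall>c x y. ip (sc c x) y = c * ip x y) \<and>
     (\<forall>x y. ip y x = cnj (ip x y)) \<and>
     (\<forall>x. Im (ip x x) = 0 \<and> Re (ip x x) \<ge> 0) \<and>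
     (\<forall>x. ip x x = 0 \<longrightarrow> x = 0)"

definition hnorm :: "('a \<Rightarrow> 'a \<Rightarrow> complex) \<Rightarrow> 'a \<Rightarrow> real" where
  "hnorm ip x = sqrt (Re (ip x x))"

definition hilbert_space :: "(complex \<Rightarrow> 'a \<Rightarrow> 'a) \<Rightarrow> ('a::ab_group_add \<Rightarrow> 'a \<Rightarrow> complex) \<Rightarrow> bool" where
  "hilbert_space sc ip \<longleftrightarrow> vector_space sc \<and> complex_inner_product sc ip \<and>
     (\<forall>X. (\<forall>e>0. \<exists>N. \<forall>m\<ge>N. \<forall>n\<ge>N. hnorm ip (X m - X n) < e) \<longrightarrow>
          (\<exists>l. (\<lambda>n. hnorm ip (X n - l)) \<longlonglongrightarrow> 0))"

definition hnorm_open :: "('a::ab_group_add \<Rightarrow> 'a \<Rightarrow> complex) \<Rightarrow> 'a set \<Rightarrow> bool" where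
  "hnorm_open ip U \<longleftrightarrow> (\<forall>x\<in>U. \<exists>e>0. \<forall>y. hnorm ip (y - x) < e \<longrightarrow> y \<in> U)"

text \<open>Convexity and locally convex topological vector space topologies, with explicit
  operations (so that they apply both to 'a and to spaces of functionals).\<close>

definition convex_wrt :: "('b \<Rightarrow> 'b \<Rightarrow> 'b) \<Rightarrow> (complex \<Rightarrow> 'b \<Rightarrow> 'b) \<Rightarrow> 'b set \<Rightarrow> bool" where
  "convex_wrt add sc V \<longleftrightarrow>
     (\<forall>x\<in>V. \<forall>y\<in>V. \<forall>u::real. 0 \<le> u \<and> u \<le> 1 \<longrightarrow>
        add (sc (complex_of_real u) x) (sc (complex_of_real (1 - u)) y) \<in> V)"

definition lctvs :: "('b \<Rightarrow> 'b \<Rightarrow> 'b) \<Rightarrow> (complex \<Rightarrow> 'b \<Rightarrow> 'b) \<Rightarrow> 'b \<Rightarrow> 'b topology \<Rightarrow> bool" where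
  "lctvs add sc zero T \<longleftrightarrow>
     zero \<in> topspace T \<and>
     continuous_map (prod_topology T T) T (\<lambda>(x, y). add x y) \<and>
     continuous_map (prod_topology euclidean T) T (\<lambda>(c, x). sc c x) \<and>
     (\<forall>U. openin T U \<and> zero \<in> U \<longrightarrow>
        (\<exists>V. openin T V \<and> zero \<in> V \<and> V \<subseteq> U \<and> convex_wrt add sc V))"

definition tvs_bounded :: "(complex \<Rightarrow> 'b \<Rightarrow> 'b) \<Rightarrow> 'b \<Rightarrow> 'b topology \<Rightarrow> 'b set \<Rightarrow> bool" where
  "tvs_bounded sc zero T B \<longleftrightarrow> B \<subseteq> topspace T \<and>
     (\<forall>U. openin T U \<and> zero \<in> U \<longrightarrow>
        (\<exists>s>0. \<forall>r::real. r > s \<longrightarrow> B \<subseteq> sc (complex_of_real r) ` U))"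

definition unif_top :: "'x set \<Rightarrow> 'y set set \<Rightarrow> ('x \<Rightarrow> 'y \<Rightarrow> complex) \<Rightarrow> 'x topology" where
  "unif_top X BS ev = topology (\<lambda>U. U \<subseteq> X \<and>
     (\<forall>x\<in>U. \<exists>B\<in>BS. \<exists>e>0. {z\<in>X. \<forall>y\<in>B. cmod (ev z y - ev x y) < e} \<subseteq> U))"

text \<open>The conjugate dual D^x of D[t]: continuous conjugate-linear functionals on D,
  normalised to vanish outside D (so that they are determined by their values on D).
  The duality form is  <Phi, f> = Phi f.\<close>

definition cdual :: "(complex \<Rightarrow> 'a \<Rightarrow> 'a) \<Rightarrow> 'a::ab_group_add set \<Rightarrow> 'a topology \<Rightarrow> ('a \<Rightarrow> complex) set" where
  "cdual sc D t = {\<Phi>.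
     (\<forall>x\<in>D. \<forall>y\<in>D. \<Phi> (x + y) = \<Phi> x + \<Phi> y) \<and>
     (\<forall>c. \<forall>x\<in>D. \<Phi> (sc c x) = cnj c * \<Phi> x) \<and>
     continuous_map t euclidean \<Phi> \<and>
     (\<forall>x. x \<notin> D \<longrightarrow> \<Phi> x = 0)}"

definition fadd :: "('a \<Rightarrow> complex) \<Rightarrow> ('a \<Rightarrow> complex) \<Rightarrow> ('a \<Rightarrow> complex)" where
  "fadd \<Phi> \<Psi> = (\<lambda>x. \<Phi> x + \<Psi> x)"

definition fscale :: "complex \<Rightarrow> ('a \<Rightarrow> complex) \<Rightarrow> ('a \<Rightarrow> complex)" where
  "fscale c \<Phi> = (\<lambda>x. c * \<Phi> x)"

definition fzero :: "'a \<Rightarrow> complex" where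
  "fzero = (\<lambda>x. 0)"

text \<open>The strong dual topology t^x = beta(D^x, D): uniform convergence on t-bounded subsets of D.\<close>

definition strong_dual_top :: "(complex \<Rightarrow> 'a \<Rightarrow> 'a) \<Rightarrow> 'a::ab_group_add set \<Rightarrow> 'a topology \<Rightarrow> ('a \<Rightarrow> complex) topology" where
  "strong_dual_top sc D t =
     unif_top (cdual sc D t) {B. tvs_bounded sc 0 t B} (\<lambda>\<Phi> f. \<Phi> f)"

definition bidual :: "(complex \<Rightarrow> 'a \<Rightarrow> 'a) \<Rightarrow> 'a::ab_group_add set \<Rightarrow> 'a topology \<Rightarrow> (('a \<Rightarrow> complex) \<Rightarrow> complex) set" where
  "bidual sc D t = {F.
     (\<forall>\<Phi>\<in>cdual sc D t. \<forall>\<Psi>\<in>cdual sc D t. F (fadd \<Phi> \<Psi>) = F \<Phi> + F \<Psi>) \<and>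
     (\<forall>c. \<forall>\<Phi>\<in>cdual sc D t. F (fscale c \<Phi>) = c * F \<Phi>) \<and>
     continuous_map (strong_dual_top sc D t) euclidean F \<and>
     (\<forall>\<Phi>. \<Phi> \<notin> cdual sc D t \<longrightarrow> F \<Phi> = 0)}"

definition strong_bidual_top :: "(complex \<Rightarrow> 'a \<Rightarrow> 'a) \<Rightarrow> 'a::ab_group_add set \<Rightarrow> 'a topology \<Rightarrow> (('a \<Rightarrow> complex) \<Rightarrow> complex) topology" where
  "strong_bidual_top sc D t =
     unif_top (bidual sc D t) {M. tvs_bounded fscale fzero (strong_dual_top sc D t) M} (\<lambda>F \<Phi>. F \<Phi>)"

definition canon :: "(complex \<Rightarrow> 'a \<Rightarrow> 'a) \<Rightarrow> 'a::ab_group_add set \<Rightarrow> 'a topology \<Rightarrow> 'a \<Rightarrow> (('a \<Rightarrow> complex) \<Rightarrow> complex)" where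
  "canon sc D t f = (\<lambda>\<Phi>. if \<Phi> \<in> cdual sc D t then \<Phi> f else 0)"

definition reflexive_space :: "(complex \<Rightarrow> 'a \<Rightarrow> 'a) \<Rightarrow> 'a::ab_group_add set \<Rightarrow> 'a topology \<Rightarrow> bool" where
  "reflexive_space sc D t \<longleftrightarrow>
     bij_betw (canon sc D t) D (bidual sc D t) \<and>
     homeomorphic_map t (strong_bidual_top sc D t) (canon sc D t)"

text \<open>Rigged Hilbert space D[t] \<subset> H \<subset> D^x[t^x]: H = the whole type 'a is a Hilbert space,
  D a dense subspace, t a locally convex (vector space) topology on D finer than the
  topology induced by the Hilbert norm.\<close>

definition rigged_hilbert_space :: "(complex \<Rightarrow> 'a \<Rightarrow> 'a) \<Rightarrow> ('a::ab_group_add \<Rightarrow> 'a \<Rightarrow> complex) \<Rightarrow> 'a set \<Rightarrow> 'a topology \<Rightarrow> bool" where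
  "rigged_hilbert_space sc ip D t \<longleftrightarrow>
     hilbert_space sc ip \<and>
     module.subspace sc D \<and>
     (\<forall>x. \<forall>e>0. \<exists>y\<in>D. hnorm ip (x - y) < e) \<and>
     topspace t = D \<and>
     lctvs (+) sc 0 t \<and>
     (\<forall>U. hnorm_open ip U \<longrightarrow> openin t (U \<inter> D))"

text \<open>Schauder basis of D[t] (indexed from 0): unique t-convergent expansions, with
  t-continuous coefficient functionals.\<close>

definition schauder_basis :: "(complex \<Rightarrow> 'a \<Rightarrow> 'a) \<Rightarrow> 'a::ab_group_add set \<Rightarrow> 'a topology \<Rightarrow> (nat \<Rightarrow> 'a) \<Rightarrow> bool" where
  "schauder_basis sc D t \<xi> \<longleftrightarrow>
     (\<forall>n. \<xi> n \<in> D) \<and>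
     (\<forall>\<phi>\<in>D. \<exists>!c::nat \<Rightarrow> complex. limitin t (\<lambda>N. \<Sum>n<N. sc (c n) (\<xi> n)) \<phi> sequentially) \<and>
     (\<forall>n. continuous_map t euclidean
        (\<lambda>\<phi>. (THE c::nat \<Rightarrow> complex. limitin t (\<lambda>N. \<Sum>n<N. sc (c n) (\<xi> n)) \<phi> sequentially) n))"

text \<open>Topologies of the conjugate dual pair (D^x, D): locally convex vector topologies on D^x
  whose continuous linear functionals are exactly the evaluations Phi \<mapsto> <Phi, f>, f in D.\<close>

definition compatible_top :: "(complex \<Rightarrow> 'a \<Rightarrow> 'a) \<Rightarrow> 'a::ab_group_add set \<Rightarrow> 'a topology \<Rightarrow> ('a \<Rightarrow> complex) topology \<Rightarrow> bool" where
  "compatible_top sc D t \<tau> \<longleftrightarrow>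
     topspace \<tau> = cdual sc D t \<and>
     lctvs fadd fscale fzero \<tau> \<and>
     (\<forall>L :: ('a \<Rightarrow> complex) \<Rightarrow> complex.
        ((\<forall>\<Phi>\<in>cdual sc D t. \<forall>\<Psi>\<in>cdual sc D t. L (fadd \<Phi> \<Psi>) = L \<Phi> + L \<Psi>) \<and>
         (\<forall>c. \<forall>\<Phi>\<in>cdual sc D t. L (fscale c \<Phi>) = c * L \<Phi>) \<and>
         continuous_map \<tau> euclidean L)
        \<longleftrightarrow> (\<exists>f\<in>D. \<forall>\<Phi>\<in>cdual sc D t. L \<Phi> = \<Phi> f))"

definition fspan :: "(nat \<Rightarrow> 'a \<Rightarrow> complex) \<Rightarrow> ('a \<Rightarrow> complex) set" where
  "fspan \<zeta> = {\<Phi>. \<exists>N (c::nat \<Rightarrow> complex). \<Phi> = (\<lambda>x. \<Sum>n<N. c n * \<zeta> n x)}"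

end

theory Submission
  imports Defs
begin

text \<open>Part (ii) holds because \<Psi> is continuous and conjugate linear: apply it to the partial
  sums of the expansion of f. For part (i), suppose some \<Psi> in the conjugate dual is not in the
  closure of the span of the \<zeta> n. The Hahn-Banach separation theorem gives a continuous linear
  functional L on the dual that vanishes on every \<zeta> n with L \<Psi> \<noteq> 0. For a topology of the
  dual pair, and for the strong dual topology when D is reflexive, L is the evaluation at some
  g \<in> D. Then \<zeta> n g = 0 for all n, and part (ii) gives \<Psi> g = (\<Sum>n. \<Psi> (\<xi> n) * \<zeta> n g) = 0,
  a contradiction.

  The separation theorem rests on a Zorn's lemma extension of real-linear
  functionals dominated by the Minkowski functional of a convex neighbourhood, followed by
  complexification.\<close>

section \<open>Separation in locally convex spaces of functionals\<close>

lemma fadd_apply [simp]: "fadd \<Phi> \<Psi> x = \<Phi> x + \<Psi> x"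
  by (simp add: fadd_def)

lemma fscale_apply [simp]: "fscale c \<Phi> x = c * \<Phi> x"
  by (simp add: fscale_def)

lemma fzero_apply [simp]: "fzero x = 0"
  by (simp add: fzero_def)

definition fscaleR :: "real \<Rightarrow> ('a \<Rightarrow> complex) \<Rightarrow> 'a \<Rightarrow> complex" where
  "fscaleR r = fscale (complex_of_real r)"

lemma fscaleR_apply [simp]: "fscaleR r \<Phi> x = complex_of_real r * \<Phi> x"
  by (simp add: fscaleR_def)

lemma fscaleR_fscaleR: "fscaleR a (fscaleR b \<Phi>) = fscaleR (a * b) \<Phi>"
  by (simp add: fun_eq_iff)

lemma fadd_fscaleR: "fadd (fscaleR a \<Phi>) (fscaleR a \<Psi>) = fscaleR a (fadd \<Phi> \<Psi>)"
  by (simp add: fun_eq_iff distrib_left)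

lemma fadd_fscaleR_eq_imp:
  assumes eq: "fadd x1 (fscaleR s1 y) = fadd x2 (fscaleR s2 y)" and "s1 \<noteq> s2"
  shows "y = fscaleR (1 / (s2 - s1)) (fadd x1 (fscaleR (-1) x2))"
proof
  fix z
  have "x1 z + complex_of_real s1 * y z = x2 z + complex_of_real s2 * y z"
    using fun_cong[OF eq, of z] by simp
  then have "complex_of_real (s2 - s1) * y z = x1 z - x2 z"
    by (simp add: algebra_simps)
  then show "y z = fscaleR (1 / (s2 - s1)) (fadd x1 (fscaleR (-1) x2)) z"
    using \<open>s1 \<noteq> s2\<close> by (simp add: field_simps)
qed

definition graph_extension ::
    "(('a \<Rightarrow> complex) \<times> real) set \<Rightarrow> ('a \<Rightarrow> complex) \<Rightarrow> real \<Rightarrow> (('a \<Rightarrow> complex) \<times> real) set" where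
  "graph_extension G y c = {(fadd x (fscaleR s y), a + s * c) | x a s. (x, a) \<in> G}"

lemma subset_graph_extension: "G \<subseteq> graph_extension G y c"
proof
  fix P assume "P \<in> G"
  moreover obtain x a where "P = (x, a)" by (cases P)
  moreover have "fadd x (fscaleR 0 y) = x" by (simp add: fun_eq_iff)
  ultimately show "P \<in> graph_extension G y c" unfolding graph_extension_def by force
qed

lemma in_graph_extension: "(fzero, 0) \<in> G \<Longrightarrow> (y, c) \<in> graph_extension G y c"
  unfolding graph_extension_def
  by (rule CollectI, rule exI[of _ fzero], rule exI[of _ 0], rule exI[of _ 1]) (simp add: fun_eq_iff)

text \<open>Only separate continuity of the vector operations is required: this is all that the
  separation theorem needs, and it is easy to verify for the strong dual topology.\<close>

locale lc_function_space =
  fixes T :: "('a \<Rightarrow> complex) topology"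
  assumes fzero_in_topspace: "fzero \<in> topspace T"
    and continuous_map_fadd: "a \<in> topspace T \<Longrightarrow> continuous_map T T (fadd a)"
    and continuous_map_fscale: "continuous_map T T (fscale c)"
    and continuous_map_fscale_scalar: "x \<in> topspace T \<Longrightarrow> continuous_map euclidean T (\<lambda>c. fscale c x)"
    and convex_neighbourhood: "openin T U \<Longrightarrow> fzero \<in> U \<Longrightarrow>
        \<exists>V. openin T V \<and> fzero \<in> V \<and> V \<subseteq> U \<and> convex_wrt fadd fscale V"
begin

abbreviation "E \<equiv> topspace T"

lemma fadd_in_topspace: "x \<in> E \<Longrightarrow> y \<in> E \<Longrightarrow> fadd x y \<in> E"
  using continuous_map_funspace[OF continuous_map_fadd[of x]] by (simp add: Pi_iff)

lemma fscale_in_topspace: "x \<in> E \<Longrightarrow> fscale c x \<in> E"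
  using continuous_map_funspace[OF continuous_map_fscale[of c]] by (simp add: Pi_iff)

lemma fscaleR_in_topspace: "x \<in> E \<Longrightarrow> fscaleR r x \<in> E"
  unfolding fscaleR_def by (rule fscale_in_topspace)

lemma continuous_map_affine:
  assumes "a \<in> E"
  shows "continuous_map T T (\<lambda>z. fscaleR r (fadd a (fscaleR s z)))"
proof -
  have "continuous_map T T (fscaleR r \<circ> (fadd a \<circ> fscaleR s))"
    unfolding fscaleR_def
    by (intro continuous_map_compose[OF continuous_map_compose[OF continuous_map_fscale
          continuous_map_fadd[OF assms]] continuous_map_fscale])
  then show ?thesis by (simp add: o_def)
qed

lemma complexification:
  assumes add: "\<And>x y. x \<in> E \<Longrightarrow> y \<in> E \<Longrightarrow> f (fadd x y) = f x + f y"
    and scale: "\<And>r x. x \<in> E \<Longrightarrow> f (fscaleR r x) = r * f x"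
    and cont: "continuous_map T euclidean f"
  defines "L x \<equiv> complex_of_real (f x) - \<i> * complex_of_real (f (fscale \<i> x))"
  shows "x \<in> E \<Longrightarrow> y \<in> E \<Longrightarrow> L (fadd x y) = L x + L y"
    and "x \<in> E \<Longrightarrow> L (fscale c x) = c * L x"
    and "continuous_map T euclidean L"
proof -
  have f_fscale: "f (fscale c x) = Re c * f x + Im c * f (fscale \<i> x)" if "x \<in> E" for c x
  proof -
    have "fscale c x = fadd (fscaleR (Re c) x) (fscaleR (Im c) (fscale \<i> x))"
      by (simp add: fun_eq_iff complex_eq_iff algebra_simps)
    then show ?thesis
      using that by (simp add: add scale fscaleR_in_topspace fscale_in_topspace)
  qed
  show "L (fadd x y) = L x + L y" if "x \<in> E" "y \<in> E" for x y
  proof -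
    have "fscale \<i> (fadd x y) = fadd (fscale \<i> x) (fscale \<i> y)"
      by (simp add: fun_eq_iff algebra_simps)
    then show ?thesis
      unfolding L_def using that by (simp add: add fscale_in_topspace algebra_simps)
  qed
  show "L (fscale c x) = c * L x" if "x \<in> E" for c x
  proof -
    have "fscale \<i> (fscale c x) = fscale (\<i> * c) x" by (simp add: fun_eq_iff)
    then have "f (fscale \<i> (fscale c x)) = - Im c * f x + Re c * f (fscale \<i> x)"
      using f_fscale[OF that, of "\<i> * c"] by simp
    then show ?thesis
      unfolding L_def using f_fscale[OF that, of c] by (simp add: complex_eq_iff algebra_simps)
  qed
  have "continuous_map T euclidean (\<lambda>x. f (fscale \<i> x))"
    using continuous_map_compose[OF continuous_map_fscale cont] by (simp add: o_def)
  then show "continuous_map T euclidean L"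
    unfolding L_def using cont by (auto simp: continuous_map_atin intro!: tendsto_intros)
qed

text \<open>Partial real-linear functionals are encoded by their graphs, so that chains can be
  joined by union.\<close>

definition dominated_graph :: "(('a \<Rightarrow> complex) \<Rightarrow> real) \<Rightarrow> (('a \<Rightarrow> complex) \<times> real) set \<Rightarrow> bool" where
  "dominated_graph q G \<longleftrightarrow> G \<subseteq> E \<times> UNIV \<and>
     (\<forall>x a b. (x, a) \<in> G \<longrightarrow> (x, b) \<in> G \<longrightarrow> a = b) \<and>
     (\<forall>x a y b. (x, a) \<in> G \<longrightarrow> (y, b) \<in> G \<longrightarrow> (fadd x y, a + b) \<in> G) \<and>
     (\<forall>x a r. (x, a) \<in> G \<longrightarrow> (fscaleR r x, r * a) \<in> G) \<and>
     (\<forall>x a. (x, a) \<in> G \<longrightarrow> a \<le> q x)"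

lemma dominated_graphD:
  assumes "dominated_graph q G"
  shows dominated_graph_topspace: "(x, a) \<in> G \<Longrightarrow> x \<in> E"
    and dominated_graph_unique: "(x, a) \<in> G \<Longrightarrow> (x, b) \<in> G \<Longrightarrow> a = b"
    and dominated_graph_fadd: "(x, a) \<in> G \<Longrightarrow> (y, b) \<in> G \<Longrightarrow> (fadd x y, a + b) \<in> G"
    and dominated_graph_fscaleR: "(x, a) \<in> G \<Longrightarrow> (fscaleR r x, r * a) \<in> G"
    and dominated_graph_le: "(x, a) \<in> G \<Longrightarrow> a \<le> q x"
  using assms unfolding dominated_graph_def by blast+

lemma dominated_graph_Union:
  assumes "C \<noteq> {}" and "\<And>G. G \<in> C \<Longrightarrow> dominated_graph q G"
    and chain: "\<And>G1 G2. G1 \<in> C \<Longrightarrow> G2 \<in> C \<Longrightarrow> G1 \<subseteq> G2 \<or> G2 \<subseteq> G1"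
  shows "dominated_graph q (\<Union>C)"
proof -
  have common: "\<exists>G\<in>C. P \<in> G \<and> Q \<in> G" if "P \<in> \<Union>C" "Q \<in> \<Union>C" for P Q
    using that chain by blast
  show ?thesis
    unfolding dominated_graph_def
  proof (intro conjI allI impI)
    show "\<Union>C \<subseteq> E \<times> UNIV"
      using assms(2) dominated_graph_topspace by fast
  next
    fix x a b assume "(x, a) \<in> \<Union>C" "(x, b) \<in> \<Union>C"
    with common show "a = b" using assms(2) dominated_graph_unique by metis
  next
    fix x a y b assume "(x, a) \<in> \<Union>C" "(y, b) \<in> \<Union>C"
    with common show "(fadd x y, a + b) \<in> \<Union>C" using assms(2) dominated_graph_fadd by blast
  next
    fix x a r assume "(x, a) \<in> \<Union>C"
    then show "(fscaleR r x, r * a) \<in> \<Union>C" using assms(2) dominated_graph_fscaleR by blast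
  next
    fix x a assume "(x, a) \<in> \<Union>C"
    then show "a \<le> q x" using assms(2) dominated_graph_le by blast
  qed
qed

lemma graph_extension_unique:
  assumes G: "dominated_graph q G" and y_new: "\<And>a. (y, a) \<notin> G"
    and "(x, a) \<in> graph_extension G y c" "(x, b) \<in> graph_extension G y c"
  shows "a = b"
proof -
  obtain x1 a1 s1 x2 a2 s2
    where 1: "(x1, a1) \<in> G" "x = fadd x1 (fscaleR s1 y)" "a = a1 + s1 * c"
      and 2: "(x2, a2) \<in> G" "x = fadd x2 (fscaleR s2 y)" "b = a2 + s2 * c"
    using assms(3,4) unfolding graph_extension_def by blast
  show "a = b"
  proof (cases "s1 = s2")
    case True
    then have "x1 = x2" using 1(2) 2(2) by (simp add: fun_eq_iff)
    then show ?thesis using dominated_graph_unique[OF G] 1 2 True by blast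
  next
    case False
    then have "y = fscaleR (1 / (s2 - s1)) (fadd x1 (fscaleR (-1) x2))"
      using 1(2) 2(2) by (intro fadd_fscaleR_eq_imp) simp_all
    moreover have "(fscaleR (1 / (s2 - s1)) (fadd x1 (fscaleR (-1) x2)), (1 / (s2 - s1)) * (a1 + (-1) * a2)) \<in> G"
      using 1(1) 2(1) G by (intro dominated_graph_fscaleR dominated_graph_fadd)
    ultimately show ?thesis using y_new by simp
  qed
qed

text \<open>Positive homogeneity reduces the bound at x + s y to the cases s = 1 and s = -1, which
  are the hypotheses upper and lower.\<close>

lemma graph_extension_le:
  assumes homog: "\<And>x a. x \<in> E \<Longrightarrow> a > 0 \<Longrightarrow> q (fscaleR a x) = a * q x"
    and G: "dominated_graph q G" and y: "y \<in> E"
    and lower: "\<And>x a. (x, a) \<in> G \<Longrightarrow> a - q (fadd x (fscaleR (-1) y)) \<le> c"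
    and upper: "\<And>x a. (x, a) \<in> G \<Longrightarrow> c \<le> q (fadd x y) - a"
    and "(x, a) \<in> graph_extension G y c"
  shows "a \<le> q x"
proof -
  obtain x1 a1 s where 1: "(x1, a1) \<in> G" "x = fadd x1 (fscaleR s y)" "a = a1 + s * c"
    using assms(6) unfolding graph_extension_def by blast
  have x1: "x1 \<in> E" using dominated_graph_topspace[OF G 1(1)] .
  consider "s = 0" | "s > 0" | "s < 0" by linarith
  then show "a \<le> q x"
  proof cases
    case 1
    then have "x = x1" using \<open>x = fadd x1 (fscaleR s y)\<close> by (simp add: fun_eq_iff)
    then show ?thesis using 1 \<open>a = a1 + s * c\<close> dominated_graph_le[OF G \<open>(x1, a1) \<in> G\<close>] by simp
  next
    case 2
    have "c \<le> q (fadd (fscaleR (1 / s) x1) y) - (1 / s) * a1"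
      using upper[OF dominated_graph_fscaleR[OF G \<open>(x1, a1) \<in> G\<close>]] .
    then have "s * c \<le> s * q (fadd (fscaleR (1 / s) x1) y) - a1"
      using 2 by (simp add: field_simps)
    also have "s * q (fadd (fscaleR (1 / s) x1) y) = q (fscaleR s (fadd (fscaleR (1 / s) x1) y))"
      by (rule homog[symmetric]) (use 2 x1 y in \<open>auto intro!: fadd_in_topspace fscaleR_in_topspace\<close>)
    also have "fscaleR s (fadd (fscaleR (1 / s) x1) y) = x"
      using 1 2 by (simp add: fun_eq_iff field_simps)
    finally show ?thesis using 1(3) by linarith
  next
    case 3
    have "(-1 / s) * a1 - q (fadd (fscaleR (-1 / s) x1) (fscaleR (-1) y)) \<le> c"
      using lower[OF dominated_graph_fscaleR[OF G \<open>(x1, a1) \<in> G\<close>]] .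
    then have "a1 + s * c \<le> - s * q (fadd (fscaleR (-1 / s) x1) (fscaleR (-1) y))"
      using 3 by (simp add: field_simps)
    also have "\<dots> = q (fscaleR (- s) (fadd (fscaleR (-1 / s) x1) (fscaleR (-1) y)))"
      by (rule homog[symmetric]) (use 3 x1 y in \<open>auto intro!: fadd_in_topspace fscaleR_in_topspace\<close>)
    also have "fscaleR (- s) (fadd (fscaleR (-1 / s) x1) (fscaleR (-1) y)) = x"
      using 1 3 by (simp add: fun_eq_iff field_simps)
    finally show ?thesis using 1(3) by simp
  qed
qed

lemma dominated_graph_extension:
  assumes homog: "\<And>x a. x \<in> E \<Longrightarrow> a > 0 \<Longrightarrow> q (fscaleR a x) = a * q x"
    and G: "dominated_graph q G" and y: "y \<in> E" and y_new: "\<And>a. (y, a) \<notin> G"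
    and lower: "\<And>x a. (x, a) \<in> G \<Longrightarrow> a - q (fadd x (fscaleR (-1) y)) \<le> c"
    and upper: "\<And>x a. (x, a) \<in> G \<Longrightarrow> c \<le> q (fadd x y) - a"
  shows "dominated_graph q (graph_extension G y c)"
  unfolding dominated_graph_def
proof (intro conjI allI impI)
  show "graph_extension G y c \<subseteq> E \<times> UNIV"
    unfolding graph_extension_def
    using dominated_graph_topspace[OF G] y by (auto intro!: fadd_in_topspace fscaleR_in_topspace)
  show "a = b" if "(x, a) \<in> graph_extension G y c" "(x, b) \<in> graph_extension G y c" for x a b
    using graph_extension_unique[OF G y_new that] .
  show "a \<le> q x" if "(x, a) \<in> graph_extension G y c" for x a
    using graph_extension_le[OF homog G y lower upper that] .
next
  fix x a x' b assume "(x, a) \<in> graph_extension G y c" "(x', b) \<in> graph_extension G y c"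
  then obtain x1 a1 s1 x2 a2 s2
    where 1: "(x1, a1) \<in> G" "x = fadd x1 (fscaleR s1 y)" "a = a1 + s1 * c"
      and 2: "(x2, a2) \<in> G" "x' = fadd x2 (fscaleR s2 y)" "b = a2 + s2 * c"
    unfolding graph_extension_def by blast
  have "fadd x x' = fadd (fadd x1 x2) (fscaleR (s1 + s2) y)" "a + b = (a1 + a2) + (s1 + s2) * c"
    using 1 2 by (simp_all add: fun_eq_iff algebra_simps)
  then show "(fadd x x', a + b) \<in> graph_extension G y c"
    unfolding graph_extension_def using dominated_graph_fadd[OF G 1(1) 2(1)] by blast
next
  fix x a r assume "(x, a) \<in> graph_extension G y c"
  then obtain x1 a1 s where 1: "(x1, a1) \<in> G" "x = fadd x1 (fscaleR s y)" "a = a1 + s * c"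
    unfolding graph_extension_def by blast
  have "fscaleR r x = fadd (fscaleR r x1) (fscaleR (r * s) y)" "r * a = r * a1 + (r * s) * c"
    using 1 by (simp_all add: fun_eq_iff algebra_simps)
  then show "(fscaleR r x, r * a) \<in> graph_extension G y c"
    unfolding graph_extension_def using dominated_graph_fscaleR[OF G 1(1)] by blast
qed

text \<open>The admissible values of the extension at y form the interval between the supremum
  of the lower bounds and the infimum of the upper bounds; subadditivity makes it nonempty.\<close>

lemma dominated_graph_extension_exists:
  assumes subadd: "\<And>x y. x \<in> E \<Longrightarrow> y \<in> E \<Longrightarrow> q (fadd x y) \<le> q x + q y"
    and homog: "\<And>x a. x \<in> E \<Longrightarrow> a > 0 \<Longrightarrow> q (fscaleR a x) = a * q x"
    and G: "dominated_graph q G" and zero: "(fzero, 0) \<in> G"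
    and y: "y \<in> E" and y_new: "\<And>a. (y, a) \<notin> G"
  shows "\<exists>c. dominated_graph q (graph_extension G y c)"
proof -
  define S where "S = {a - q (fadd x (fscaleR (-1) y)) | x a. (x, a) \<in> G}"
  have S_bound: "s \<le> q (fadd w y) - b" if "s \<in> S" "(w, b) \<in> G" for s w b
  proof -
    obtain x a where xa: "(x, a) \<in> G" "s = a - q (fadd x (fscaleR (-1) y))"
      using \<open>s \<in> S\<close> unfolding S_def by blast
    have "a + b \<le> q (fadd x w)"
      using dominated_graph_le[OF G dominated_graph_fadd[OF G xa(1) that(2)]] .
    also have "fadd x w = fadd (fadd x (fscaleR (-1) y)) (fadd w y)"
      by (simp add: fun_eq_iff)
    also have "q \<dots> \<le> q (fadd x (fscaleR (-1) y)) + q (fadd w y)"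
      using dominated_graph_topspace[OF G] xa(1) that(2) y
      by (intro subadd) (auto intro: fadd_in_topspace fscaleR_in_topspace)
    finally show ?thesis using xa(2) by simp
  qed
  have "S \<noteq> {}" using zero unfolding S_def by blast
  have "bdd_above S"
    unfolding bdd_above_def using S_bound[OF _ zero] by blast
  show ?thesis
  proof (intro exI dominated_graph_extension[OF homog G y y_new])
    show "a - q (fadd x (fscaleR (-1) y)) \<le> Sup S" if "(x, a) \<in> G" for x a
      using that by (intro cSup_upper[OF _ \<open>bdd_above S\<close>]) (auto simp: S_def)
    show "Sup S \<le> q (fadd x y) - a" if "(x, a) \<in> G" for x a
      using S_bound that by (intro cSup_least[OF \<open>S \<noteq> {}\<close>]) auto
  qed
qed

lemma maximal_dominated_graph:
  assumes "dominated_graph q G0"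
  obtains G where "dominated_graph q G" "G0 \<subseteq> G"
    and "\<And>X. dominated_graph q X \<Longrightarrow> G \<subseteq> X \<Longrightarrow> X = G"
proof -
  define A where "A = {G. dominated_graph q G \<and> G0 \<subseteq> G}"
  have "\<exists>M\<in>A. \<forall>X\<in>A. M \<subseteq> X \<longrightarrow> X = M"
  proof (rule Zorn_Lemma2, rule ballI)
    fix C assume C: "C \<in> chains A"
    show "\<exists>U\<in>A. \<forall>X\<in>C. X \<subseteq> U"
    proof (cases "C = {}")
      case True
      then show ?thesis using assms unfolding A_def by blast
    next
      case False
      have "dominated_graph q (\<Union>C)"
        using chainsD2[OF C] chainsD[OF C]
        by (intro dominated_graph_Union[OF False]) (auto simp: A_def)
      moreover have "G0 \<subseteq> \<Union>C" using False chainsD2[OF C] unfolding A_def by blast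
      ultimately show ?thesis unfolding A_def by blast
    qed
  qed
  then obtain G where "G \<in> A" and G_max: "\<And>X. X \<in> A \<Longrightarrow> G \<subseteq> X \<Longrightarrow> X = G"
    by blast
  then show thesis using that unfolding A_def by auto
qed

theorem hahn_banach_real:
  assumes subadd: "\<And>x y. x \<in> E \<Longrightarrow> y \<in> E \<Longrightarrow> q (fadd x y) \<le> q x + q y"
    and homog: "\<And>x a. x \<in> E \<Longrightarrow> a > 0 \<Longrightarrow> q (fscaleR a x) = a * q x"
    and G0: "dominated_graph q G0" "G0 \<noteq> {}"
  obtains f where "\<And>x y. x \<in> E \<Longrightarrow> y \<in> E \<Longrightarrow> f (fadd x y) = f x + f y"
    and "\<And>r x. x \<in> E \<Longrightarrow> f (fscaleR r x) = r * f x"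
    and "\<And>x. x \<in> E \<Longrightarrow> f x \<le> q x"
    and "\<And>x a. (x, a) \<in> G0 \<Longrightarrow> f x = a"
proof -
  obtain G where G: "dominated_graph q G" "G0 \<subseteq> G"
    and G_max: "\<And>X. dominated_graph q X \<Longrightarrow> G \<subseteq> X \<Longrightarrow> X = G"
    using maximal_dominated_graph[OF G0(1)] by blast
  obtain x0 a0 where "(x0, a0) \<in> G" using G0 G(2) by auto
  moreover have "fscaleR 0 x0 = fzero" by (simp add: fun_eq_iff)
  ultimately have zero: "(fzero, 0) \<in> G" using dominated_graph_fscaleR[OF G(1), of x0 a0 0] by simp
  have total: "\<exists>a. (y, a) \<in> G" if y: "y \<in> E" for y
  proof (rule ccontr)
    assume "\<nexists>a. (y, a) \<in> G"
    then obtain c where "dominated_graph q (graph_extension G y c)"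
      using dominated_graph_extension_exists[OF subadd homog G(1) zero y] by blast
    then have "graph_extension G y c = G"
      using G_max subset_graph_extension by blast
    then have "(y, c) \<in> G" using in_graph_extension[OF zero, of y c] by simp
    then show False using \<open>\<nexists>a. (y, a) \<in> G\<close> by blast
  qed
  define f where "f x = (THE a. (x, a) \<in> G)" for x
  have f_eq: "f x = a" if "(x, a) \<in> G" for x a
    unfolding f_def using that dominated_graph_unique[OF G(1)] by blast
  have f_graph: "(x, f x) \<in> G" if "x \<in> E" for x
    using total[OF that] f_eq by blast
  show thesis
  proof
    show "f (fadd x y) = f x + f y" if "x \<in> E" "y \<in> E" for x y
      using that f_eq dominated_graph_fadd[OF G(1) f_graph f_graph] by blast
    show "f (fscaleR r x) = r * f x" if "x \<in> E" for r x
      using that f_eq dominated_graph_fscaleR[OF G(1) f_graph] by blast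
    show "f x \<le> q x" if "x \<in> E" for x
      using that dominated_graph_le[OF G(1) f_graph] by blast
    show "f x = a" if "(x, a) \<in> G0" for x a
      using that f_eq G(2) by blast
  qed
qed

end

section \<open>The Minkowski functional of a convex neighbourhood\<close>

locale minkowski_functional = lc_function_space +
  fixes V :: "('a \<Rightarrow> complex) set"
  assumes openin_V: "openin T V" and fzero_in_V: "fzero \<in> V"
    and convex_V: "convex_wrt fadd fscale V"
begin

definition radii :: "('a \<Rightarrow> complex) \<Rightarrow> real set" where
  "radii x = {r. r > 0 \<and> fscaleR (1 / r) x \<in> V}"

definition mink :: "('a \<Rightarrow> complex) \<Rightarrow> real" where
  "mink x = Inf (radii x)"

lemma V_subset_topspace: "V \<subseteq> E"
  using openin_subset[OF openin_V] .

lemma convex_combination_in_V: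
  "x \<in> V \<Longrightarrow> y \<in> V \<Longrightarrow> 0 \<le> u \<Longrightarrow> u \<le> 1 \<Longrightarrow> fadd (fscaleR u x) (fscaleR (1 - u) y) \<in> V"
  using convex_V unfolding convex_wrt_def fscaleR_def by blast

lemma fscaleR_in_V:
  assumes "v \<in> V" "0 \<le> u" "u \<le> 1"
  shows "fscaleR u v \<in> V"
proof -
  have "fadd (fscaleR u v) (fscaleR (1 - u) fzero) = fscaleR u v" by (simp add: fun_eq_iff)
  then show ?thesis using convex_combination_in_V[OF assms(1) fzero_in_V assms(2,3)] by simp
qed

lemma open_scalars_into_V: "x \<in> E \<Longrightarrow> open {c. fscale c x \<in> V}"
  using openin_continuous_map_preimage[OF continuous_map_fscale_scalar openin_V] by simp

lemma radii_mono: "r \<in> radii x \<Longrightarrow> r \<le> s \<Longrightarrow> s \<in> radii x"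
proof -
  assume r: "r \<in> radii x" and "r \<le> s"
  then have "r > 0" "fscaleR (1 / r) x \<in> V" "0 \<le> r / s" "r / s \<le> 1"
    unfolding radii_def by auto
  then have "fscaleR (r / s) (fscaleR (1 / r) x) \<in> V"
    using fscaleR_in_V by blast
  moreover have "fscaleR (r / s) (fscaleR (1 / r) x) = fscaleR (1 / s) x"
    using \<open>r > 0\<close> by (simp add: fun_eq_iff)
  ultimately show ?thesis using \<open>r > 0\<close> \<open>r \<le> s\<close> unfolding radii_def by auto
qed

lemma radii_nonempty: "x \<in> E \<Longrightarrow> radii x \<noteq> {}"
proof -
  assume "x \<in> E"
  have "0 \<in> {c. fscale c x \<in> V}" using fzero_in_V by (simp add: fscale_def fzero_def)
  then obtain d where d: "d > 0" "ball 0 d \<subseteq> {c. fscale c x \<in> V}"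
    using open_scalars_into_V[OF \<open>x \<in> E\<close>] open_contains_ball by blast
  have "complex_of_real (1 / (2 / d)) \<in> ball 0 d" using d(1) by (simp add: dist_norm)
  then have "fscaleR (1 / (2 / d)) x \<in> V" using d(2) unfolding fscaleR_def by blast
  then have "2 / d \<in> radii x" using d(1) unfolding radii_def by auto
  then show ?thesis by blast
qed

lemma bdd_below_radii: "bdd_below (radii x)"
  unfolding radii_def bdd_below_def by (rule exI[of _ 0]) auto

lemma mink_nonneg: "x \<in> E \<Longrightarrow> 0 \<le> mink x"
  unfolding mink_def by (rule cInf_greatest[OF radii_nonempty]) (auto simp: radii_def)

lemma in_V_if_mink_less_one: "x \<in> E \<Longrightarrow> mink x < 1 \<Longrightarrow> x \<in> V"
proof -
  assume "x \<in> E" "mink x < 1"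
  then obtain r where "r \<in> radii x" "r < 1"
    using cInf_lessD[OF radii_nonempty] unfolding mink_def by blast
  then have "1 \<in> radii x" using radii_mono by force
  moreover have "fscaleR (1 / 1) x = x" by (simp add: fun_eq_iff)
  ultimately show ?thesis unfolding radii_def by simp
qed

text \<open>V is open, so x is still in V after a small dilation.\<close>

lemma mink_less_one: "x \<in> V \<Longrightarrow> mink x < 1"
proof -
  assume "x \<in> V"
  then have "x \<in> E" "1 \<in> {c. fscale c x \<in> V}"
    using V_subset_topspace by (auto simp: fscale_def)
  then obtain d where d: "d > 0" "ball 1 d \<subseteq> {c. fscale c x \<in> V}"
    using open_scalars_into_V open_contains_ball by blast
  have "complex_of_real (1 / (1 / (1 + d / 2))) \<in> ball 1 d" using d(1) by (simp add: dist_norm)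
  then have "fscaleR (1 / (1 / (1 + d / 2))) x \<in> V" using d(2) unfolding fscaleR_def by blast
  then have "1 / (1 + d / 2) \<in> radii x" using d(1) unfolding radii_def by (auto simp: field_simps)
  then have "mink x \<le> 1 / (1 + d / 2)" unfolding mink_def by (rule cInf_lower[OF _ bdd_below_radii])
  also have "\<dots> < 1" using d(1) by (simp add: field_simps)
  finally show ?thesis .
qed

lemma mink_fscaleR_le:
  assumes "x \<in> E" "a > 0"
  shows "mink (fscaleR a x) \<le> a * mink x"
proof -
  have "mink (fscaleR a x) / a \<le> mink x"
    unfolding mink_def[of x]
  proof (rule cInf_greatest[OF radii_nonempty[OF assms(1)]])
    fix r assume r: "r \<in> radii x"
    have "fscaleR (1 / (a * r)) (fscaleR a x) = fscaleR (1 / r) x"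
      using assms(2) r unfolding radii_def by (auto simp: fun_eq_iff)
    then have "a * r \<in> radii (fscaleR a x)"
      using assms(2) r unfolding radii_def by auto
    then have "mink (fscaleR a x) \<le> a * r" unfolding mink_def by (rule cInf_lower[OF _ bdd_below_radii])
    then show "mink (fscaleR a x) / a \<le> r" using assms(2) by (simp add: field_simps)
  qed
  then show ?thesis using assms(2) by (simp add: field_simps)
qed

lemma mink_fscaleR:
  assumes "x \<in> E" "a > 0"
  shows "mink (fscaleR a x) = a * mink x"
proof -
  have "mink (fscaleR (1 / a) (fscaleR a x)) \<le> (1 / a) * mink (fscaleR a x)"
    by (rule mink_fscaleR_le) (use assms in \<open>auto intro: fscaleR_in_topspace\<close>)
  moreover have "fscaleR (1 / a) (fscaleR a x) = x"
    using assms(2) by (simp add: fun_eq_iff)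
  ultimately have "a * mink x \<le> mink (fscaleR a x)" using assms(2) by (simp add: field_simps)
  then show ?thesis using mink_fscaleR_le[OF assms] by simp
qed

lemma radii_fadd:
  assumes "r \<in> radii x" "s \<in> radii y"
  shows "r + s \<in> radii (fadd x y)"
proof -
  have r: "r > 0" "fscaleR (1 / r) x \<in> V" and s: "s > 0" "fscaleR (1 / s) y \<in> V"
    using assms unfolding radii_def by auto
  have "0 \<le> r / (r + s)" "r / (r + s) \<le> 1" using r s by auto
  then have "fadd (fscaleR (r / (r + s)) (fscaleR (1 / r) x)) (fscaleR (1 - r / (r + s)) (fscaleR (1 / s) y)) \<in> V"
    using convex_combination_in_V r s by blast
  moreover have "fadd (fscaleR (r / (r + s)) (fscaleR (1 / r) x)) (fscaleR (1 - r / (r + s)) (fscaleR (1 / s) y)) =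
       fscaleR (1 / (r + s)) (fadd x y)"
  proof -
    have c1: "r / (r + s) * (1 / r) = 1 / (r + s)" and c2: "(1 - r / (r + s)) * (1 / s) = 1 / (r + s)"
      using r(1) s(1) by (auto simp: field_simps)
    show ?thesis unfolding fscaleR_fscaleR c1 c2 fadd_fscaleR ..
  qed
  ultimately show ?thesis using r s unfolding radii_def by auto
qed

lemma mink_fadd_le:
  assumes "x \<in> E" "y \<in> E"
  shows "mink (fadd x y) \<le> mink x + mink y"
proof -
  have 1: "mink (fadd x y) \<le> r + s" if "r \<in> radii x" "s \<in> radii y" for r s
    unfolding mink_def by (rule cInf_lower[OF radii_fadd[OF that] bdd_below_radii])
  have 2: "mink (fadd x y) - s \<le> mink x" if "s \<in> radii y" for s
    unfolding mink_def[of x] by (rule cInf_greatest[OF radii_nonempty[OF assms(1)]]) (use 1 that in force)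
  have "mink (fadd x y) - mink x \<le> mink y"
    unfolding mink_def[of y] by (rule cInf_greatest[OF radii_nonempty[OF assms(2)]]) (use 2 in force)
  then show ?thesis by simp
qed


text \<open>The functional is obtained by extending the zero functional on M to the span of M and
  \<Psi>, with value -1 at \<Psi>, and then to all of E by Hahn-Banach.\<close>

lemma real_functional_separating:
  assumes M: "M \<subseteq> E" "fzero \<in> M" "\<And>x y. x \<in> M \<Longrightarrow> y \<in> M \<Longrightarrow> fadd x y \<in> M"
      "\<And>r x. x \<in> M \<Longrightarrow> fscaleR r x \<in> M"
    and \<Psi>: "\<Psi> \<in> E" "\<And>m. m \<in> M \<Longrightarrow> fadd m (fscaleR (-1) \<Psi>) \<notin> V"
  obtains f where "\<And>x y. x \<in> E \<Longrightarrow> y \<in> E \<Longrightarrow> f (fadd x y) = f x + f y"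
    and "\<And>r x. x \<in> E \<Longrightarrow> f (fscaleR r x) = r * f x"
    and "\<And>x. x \<in> E \<Longrightarrow> f x \<le> mink x"
    and "\<And>m. m \<in> M \<Longrightarrow> f m = 0" and "f \<Psi> = -1"
proof -
  define G where "G = {(m, 0 :: real) | m. m \<in> M}"
  have "fadd \<Psi> (fscaleR (-1) \<Psi>) = fzero" by (simp add: fun_eq_iff)
  then have "\<Psi> \<notin> M" using \<Psi>(2) fzero_in_V by force
  have G: "dominated_graph mink G"
    unfolding dominated_graph_def G_def using M mink_nonneg by auto
  have ext: "dominated_graph mink (graph_extension G \<Psi> (-1))"
  proof (rule dominated_graph_extension[OF mink_fscaleR G \<Psi>(1)])
    show "(\<Psi>, a) \<notin> G" for a using \<open>\<Psi> \<notin> M\<close> unfolding G_def by blast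
    show "a - mink (fadd x (fscaleR (-1) \<Psi>)) \<le> -1" if "(x, a) \<in> G" for x a
    proof -
      have "x \<in> M" "a = 0" using that unfolding G_def by auto
      moreover have "fadd x (fscaleR (-1) \<Psi>) \<in> E"
        using M(1) \<open>x \<in> M\<close> \<Psi>(1) by (blast intro: fadd_in_topspace fscaleR_in_topspace)
      ultimately have "1 \<le> mink (fadd x (fscaleR (-1) \<Psi>))"
        using in_V_if_mink_less_one \<Psi>(2) by force
      then show ?thesis using \<open>a = 0\<close> by simp
    qed
    show "-1 \<le> mink (fadd x \<Psi>) - a" if "(x, a) \<in> G" for x a
      using that M(1) \<Psi>(1) mink_nonneg[of "fadd x \<Psi>"] fadd_in_topspace unfolding G_def by force
  qed
  have zero: "(fzero, 0) \<in> G" using M(2) unfolding G_def by blast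
  then have "graph_extension G \<Psi> (-1) \<noteq> {}" using subset_graph_extension by blast
  then obtain f where f: "\<And>x y. x \<in> E \<Longrightarrow> y \<in> E \<Longrightarrow> f (fadd x y) = f x + f y"
    "\<And>r x. x \<in> E \<Longrightarrow> f (fscaleR r x) = r * f x" "\<And>x. x \<in> E \<Longrightarrow> f x \<le> mink x"
    and f_ext: "\<And>x a. (x, a) \<in> graph_extension G \<Psi> (-1) \<Longrightarrow> f x = a"
    using hahn_banach_real[OF mink_fadd_le mink_fscaleR ext] by blast
  show thesis
  proof (rule that[OF f])
    show "f m = 0" if "m \<in> M" for m
      using f_ext subset_graph_extension[of G \<Psi> "-1"] that unfolding G_def by blast
    show "f \<Psi> = -1"
      by (rule f_ext[OF in_graph_extension[OF zero]])
  qed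
qed

text \<open>On the neighbourhood of x0 of all z with z - x0 and x0 - z in e V, the functional f
  varies by less than e, since f < 1 on V.\<close>

lemma continuous_map_if_le_mink:
  assumes add: "\<And>x y. x \<in> E \<Longrightarrow> y \<in> E \<Longrightarrow> f (fadd x y) = f x + f y"
    and scale: "\<And>r x. x \<in> E \<Longrightarrow> f (fscaleR r x) = r * f x"
    and le: "\<And>x. x \<in> E \<Longrightarrow> f x \<le> mink x"
  shows "continuous_map T euclidean f"
  unfolding Met_TC.continuous_map_to_metric[unfolded mtopology_is_euclidean mball_eq_ball]
proof (intro ballI allI impI)
  fix x0 and e :: real assume x0: "x0 \<in> E" and "e > 0"
  have f_affine: "f (fscaleR r (fadd a (fscaleR s z))) = r * (f a + s * f z)" if "a \<in> E" "z \<in> E" for r a s z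
    using that by (simp add: add scale fadd_in_topspace fscaleR_in_topspace)
  have f_less_one: "f v < 1" if "v \<in> V" for v
    using le[of v] mink_less_one[OF that] V_subset_topspace that by fastforce
  define U where "U = {z \<in> E. fscaleR (1 / e) (fadd (fscaleR (-1) x0) (fscaleR 1 z)) \<in> V}
    \<inter> {z \<in> E. fscaleR (1 / e) (fadd x0 (fscaleR (-1) z)) \<in> V}"
  have "openin T U"
    unfolding U_def using x0 openin_V
    by (intro openin_Int openin_continuous_map_preimage[OF continuous_map_affine])
       (auto intro: fscaleR_in_topspace)
  moreover have "x0 \<in> U"
  proof -
    have "fscaleR (1 / e) (fadd (fscaleR (-1) x0) (fscaleR 1 x0)) = fzero"
      "fscaleR (1 / e) (fadd x0 (fscaleR (-1) x0)) = fzero"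
      by (simp_all add: fun_eq_iff)
    then show ?thesis unfolding U_def using x0 fzero_in_V by simp
  qed
  moreover have "f z \<in> ball (f x0) e" if "z \<in> U" for z
  proof -
    have z: "z \<in> E" using that unfolding U_def by blast
    have "f (fscaleR (1 / e) (fadd (fscaleR (-1) x0) (fscaleR 1 z))) < 1"
      "f (fscaleR (1 / e) (fadd x0 (fscaleR (-1) z))) < 1"
      using that f_less_one unfolding U_def by auto
    then have "(1 / e) * (f (fscaleR (-1) x0) + 1 * f z) < 1" "(1 / e) * (f x0 + (-1) * f z) < 1"
      by (simp_all only: f_affine[OF fscaleR_in_topspace[OF x0] z] f_affine[OF x0 z])
    then have "f z - f x0 < e" "f x0 - f z < e"
      using \<open>e > 0\<close> scale[OF x0, of "-1"] by (simp_all add: field_simps)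
    then show ?thesis by (simp add: dist_real_def abs_less_iff)
  qed
  ultimately show "\<exists>U. openin T U \<and> x0 \<in> U \<and> (\<forall>z\<in>U. f z \<in> ball (f x0) e)"
    by blast
qed

end

context lc_function_space
begin

theorem separation_subspace:
  assumes M: "M \<subseteq> E" "fzero \<in> M" "\<And>x y. x \<in> M \<Longrightarrow> y \<in> M \<Longrightarrow> fadd x y \<in> M"
      "\<And>c x. x \<in> M \<Longrightarrow> fscale c x \<in> M"
    and \<Psi>: "\<Psi> \<in> E" "\<Psi> \<notin> T closure_of M"
  obtains L where "\<And>x y. x \<in> E \<Longrightarrow> y \<in> E \<Longrightarrow> L (fadd x y) = L x + L y"
    and "\<And>c x. x \<in> E \<Longrightarrow> L (fscale c x) = c * L x"
    and "continuous_map T euclidean L"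
    and "\<And>m. m \<in> M \<Longrightarrow> L m = 0"
    and "L \<Psi> \<noteq> 0"
proof -
  obtain U where U: "openin T U" "\<Psi> \<in> U" "U \<inter> M = {}"
    using \<Psi> unfolding in_closure_of by blast
  define W where "W = {v \<in> E. fadd \<Psi> v \<in> U}"
  have "openin T W"
    unfolding W_def using continuous_map_fadd[OF \<Psi>(1)] U(1) by (rule openin_continuous_map_preimage)
  moreover have "fadd \<Psi> fzero = \<Psi>" by (simp add: fun_eq_iff)
  then have "fzero \<in> W"
    unfolding W_def using fzero_in_topspace U(2) by simp
  ultimately obtain V where V: "openin T V" "fzero \<in> V" "V \<subseteq> W" "convex_wrt fadd fscale V"
    using convex_neighbourhood by blast
  interpret mk: minkowski_functional T V
    by unfold_locales (use V in auto)
  have "fadd m (fscaleR (-1) \<Psi>) \<notin> V" if "m \<in> M" for m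
  proof -
    have "fadd \<Psi> (fadd m (fscaleR (-1) \<Psi>)) = m" by (simp add: fun_eq_iff)
    then show ?thesis using that V(3) U(3) unfolding W_def by auto
  qed
  then obtain f where f_add: "\<And>x y. x \<in> E \<Longrightarrow> y \<in> E \<Longrightarrow> f (fadd x y) = f x + f y"
    and f_scale: "\<And>r x. x \<in> E \<Longrightarrow> f (fscaleR r x) = r * f x"
    and f_le: "\<And>x. x \<in> E \<Longrightarrow> f x \<le> mk.mink x"
    and f_M: "\<And>m. m \<in> M \<Longrightarrow> f m = 0" and "f \<Psi> = -1"
    using mk.real_functional_separating[OF M(1,2,3) _ \<Psi>(1)] M(4) unfolding fscaleR_def by blast
  have "continuous_map T euclidean f"
    by (rule mk.continuous_map_if_le_mink[OF f_add f_scale f_le])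
  note L = complexification[OF f_add f_scale this]
  show thesis
  proof (rule that[OF L])
    show "complex_of_real (f m) - \<i> * complex_of_real (f (fscale \<i> m)) = 0" if "m \<in> M" for m
      using that M(4) f_M by simp
    show "complex_of_real (f \<Psi>) - \<i> * complex_of_real (f (fscale \<i> \<Psi>)) \<noteq> 0"
      using \<open>f \<Psi> = -1\<close> by (simp add: complex_eq_iff)
  qed
qed

end

section \<open>The conjugate dual and the span of the coefficient functionals\<close>

lemma rigged_hilbert_space_subspace:
  assumes "rigged_hilbert_space sc ip D t"
  shows "0 \<in> D" "x \<in> D \<Longrightarrow> y \<in> D \<Longrightarrow> x + y \<in> D" "x \<in> D \<Longrightarrow> sc c x \<in> D"
proof -
  have vs: "vector_space sc" and "module.subspace sc D"
    using assms unfolding rigged_hilbert_space_def hilbert_space_def by blast+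
  moreover from vs have "module sc" unfolding vector_space_def module_def .
  ultimately show "0 \<in> D" "x \<in> D \<Longrightarrow> y \<in> D \<Longrightarrow> x + y \<in> D" "x \<in> D \<Longrightarrow> sc c x \<in> D"
    using module.subspace_def by blast+
qed

lemma cdual_zero:
  assumes "\<Phi> \<in> cdual sc D t" "0 \<in> D"
  shows "\<Phi> 0 = 0"
proof -
  have "\<Phi> (0 + 0) = \<Phi> 0 + \<Phi> 0" using assms unfolding cdual_def by blast
  then show ?thesis by simp
qed

lemma fzero_in_cdual: "fzero \<in> cdual sc D t"
  unfolding cdual_def fzero_def by simp

lemma fadd_in_cdual:
  assumes "\<Phi> \<in> cdual sc D t" "\<Psi> \<in> cdual sc D t"
  shows "fadd \<Phi> \<Psi> \<in> cdual sc D t"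
proof -
  have "continuous_map t euclidean (\<lambda>x. \<Phi> x + \<Psi> x)"
    using assms unfolding cdual_def by (auto intro: continuous_map_add)
  then show ?thesis using assms unfolding cdual_def fadd_def by (simp add: algebra_simps)
qed

lemma fscale_in_cdual:
  assumes "\<Phi> \<in> cdual sc D t"
  shows "fscale c \<Phi> \<in> cdual sc D t"
proof -
  have "continuous_map t euclidean (\<lambda>x. c * \<Phi> x)"
    using assms unfolding cdual_def by (auto simp: continuous_map_atin intro!: tendsto_intros)
  then show ?thesis using assms unfolding cdual_def fscale_def by (simp add: algebra_simps)
qed

lemma cdual_expansion:
  assumes rhs: "rigged_hilbert_space sc ip D t" and \<xi>: "\<And>n. \<xi> n \<in> D"
    and expansion: "\<forall>f\<in>D. limitin t (\<lambda>N. \<Sum>n<N. sc (cnj (\<zeta> n f)) (\<xi> n)) f sequentially"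
    and \<Psi>: "\<Psi> \<in> cdual sc D t" and "f \<in> D"
  shows "(\<lambda>k. \<Psi> (\<xi> k) * \<zeta> k f) sums \<Psi> f"
proof -
  note D = rigged_hilbert_space_subspace[OF rhs]
  have add: "\<And>x y. x \<in> D \<Longrightarrow> y \<in> D \<Longrightarrow> \<Psi> (x + y) = \<Psi> x + \<Psi> y"
    and scale: "\<And>c x. x \<in> D \<Longrightarrow> \<Psi> (sc c x) = cnj c * \<Psi> x"
    and cont: "continuous_map t euclidean \<Psi>"
    using \<Psi> unfolding cdual_def by blast+
  have partial_sums: "(\<Sum>n<N. sc (cnj (\<zeta> n f)) (\<xi> n)) \<in> D \<and>
      \<Psi> (\<Sum>n<N. sc (cnj (\<zeta> n f)) (\<xi> n)) = (\<Sum>k<N. \<Psi> (\<xi> k) * \<zeta> k f)" for N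
  proof (induction N)
    case 0
    then show ?case using cdual_zero[OF \<Psi> D(1)] D(1) by simp
  next
    case (Suc N)
    then show ?case using D(2,3) \<xi> add scale by (simp add: mult.commute)
  qed
  have "limitin euclidean (\<Psi> \<circ> (\<lambda>N. \<Sum>n<N. sc (cnj (\<zeta> n f)) (\<xi> n))) (\<Psi> f) sequentially"
    using continuous_map_limit[OF cont] expansion \<open>f \<in> D\<close> by blast
  then show ?thesis unfolding sums_def using partial_sums by (simp add: o_def)
qed

lemma fspan_subset:
  assumes "fzero \<in> S" "\<And>\<Phi> \<Psi>. \<Phi> \<in> S \<Longrightarrow> \<Psi> \<in> S \<Longrightarrow> fadd \<Phi> \<Psi> \<in> S"
    "\<And>c \<Phi>. \<Phi> \<in> S \<Longrightarrow> fscale c \<Phi> \<in> S" "\<And>n. \<zeta> n \<in> S"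
  shows "fspan \<zeta> \<subseteq> S"
proof
  fix \<Phi> assume "\<Phi> \<in> fspan \<zeta>"
  then obtain N c where \<Phi>: "\<Phi> = (\<lambda>x. \<Sum>n<N. c n * \<zeta> n x)" unfolding fspan_def by blast
  have "(\<lambda>x. \<Sum>n<N. c n * \<zeta> n x) \<in> S" for N
  proof (induction N)
    case 0
    then show ?case using assms(1) by (simp add: fzero_def)
  next
    case (Suc N)
    then have "fadd (\<lambda>x. \<Sum>n<N. c n * \<zeta> n x) (fscale (c N) (\<zeta> N)) \<in> S"
      using assms(2-4) by blast
    then show ?case by (simp add: fadd_def fscale_def)
  qed
  then show "\<Phi> \<in> S" using \<Phi> by simp
qed

lemma sum_lessThan_pad:
  "N \<le> N' \<Longrightarrow> (\<Sum>n<N'. (if n < N then c n else 0) * (z n :: complex)) = (\<Sum>n<N. c n * z n)"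
  for N N' :: nat
proof (induction N')
  case (Suc N')
  then show ?case by (cases "N = Suc N'") (auto simp: lessThan_Suc)
qed simp

lemma fzero_in_fspan: "fzero \<in> fspan \<zeta>"
  unfolding fspan_def fzero_def by (rule CollectI, rule exI[of _ 0]) simp

lemma fadd_in_fspan:
  assumes "\<Phi> \<in> fspan \<zeta>" "\<Psi> \<in> fspan \<zeta>"
  shows "fadd \<Phi> \<Psi> \<in> fspan \<zeta>"
proof -
  obtain N1 c1 N2 c2 where \<Phi>: "\<Phi> = (\<lambda>x. \<Sum>n<N1. c1 n * \<zeta> n x)" and \<Psi>: "\<Psi> = (\<lambda>x. \<Sum>n<N2. c2 n * \<zeta> n x)"
    using assms unfolding fspan_def by blast
  define N where "N = max N1 N2"
  define c where "c n = (if n < N1 then c1 n else 0) + (if n < N2 then c2 n else 0)" for n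
  have "fadd \<Phi> \<Psi> = (\<lambda>x. \<Sum>n<N. c n * \<zeta> n x)"
  proof
    fix x
    have "(\<Sum>n<N. c n * \<zeta> n x) = (\<Sum>n<N. (if n < N1 then c1 n else 0) * \<zeta> n x)
        + (\<Sum>n<N. (if n < N2 then c2 n else 0) * \<zeta> n x)"
      unfolding c_def by (simp add: distrib_right sum.distrib)
    also have "\<dots> = \<Phi> x + \<Psi> x" unfolding \<Phi> \<Psi> N_def by (simp add: sum_lessThan_pad)
    finally show "fadd \<Phi> \<Psi> x = (\<Sum>n<N. c n * \<zeta> n x)" by simp
  qed
  then show ?thesis unfolding fspan_def by blast
qed

lemma fscale_in_fspan: "\<Phi> \<in> fspan \<zeta> \<Longrightarrow> fscale c \<Phi> \<in> fspan \<zeta>"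
proof -
  assume "\<Phi> \<in> fspan \<zeta>"
  then obtain N c' where \<Phi>: "\<Phi> = (\<lambda>x. \<Sum>n<N. c' n * \<zeta> n x)" unfolding fspan_def by blast
  have "fscale c \<Phi> = (\<lambda>x. \<Sum>n<N. (c * c' n) * \<zeta> n x)"
    unfolding \<Phi> fscale_def by (simp add: sum_distrib_left mult.assoc)
  then show ?thesis unfolding fspan_def by (intro CollectI exI[of _ N] exI[of _ "\<lambda>n. c * c' n"])
qed

lemma in_fspan: "\<zeta> k \<in> fspan \<zeta>"
proof -
  have "\<zeta> k = (\<lambda>x. \<Sum>n<Suc k. (if n = k then 1 else 0) * \<zeta> n x)"
    by (simp add: if_distrib sum.If_cases)
  then show ?thesis unfolding fspan_def by (intro CollectI exI[of _ "Suc k"] exI[of _ "\<lambda>n. if n = k then 1 else 0"])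
qed

lemma closure_fspan_eq_cdual:
  assumes "lc_function_space T" and top: "topspace T = cdual sc D t"
    and rhs: "rigged_hilbert_space sc ip D t"
    and \<xi>: "\<And>n. \<xi> n \<in> D" and \<zeta>: "\<And>n. \<zeta> n \<in> cdual sc D t"
    and expansion: "\<forall>f\<in>D. limitin t (\<lambda>N. \<Sum>n<N. sc (cnj (\<zeta> n f)) (\<xi> n)) f sequentially"
    and evaluation: "\<And>L. (\<forall>\<Phi>\<in>cdual sc D t. \<forall>\<Psi>\<in>cdual sc D t. L (fadd \<Phi> \<Psi>) = L \<Phi> + L \<Psi>) \<and>
         (\<forall>c. \<forall>\<Phi>\<in>cdual sc D t. L (fscale c \<Phi>) = c * L \<Phi>) \<and> continuous_map T euclidean L \<Longrightarrow>
         \<exists>g\<in>D. \<forall>\<Phi>\<in>cdual sc D t. L \<Phi> = \<Phi> g"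
  shows "T closure_of fspan \<zeta> = cdual sc D t"
proof
  interpret lc_function_space T by fact
  show "T closure_of fspan \<zeta> \<subseteq> cdual sc D t"
    using closure_of_subset_topspace[of T "fspan \<zeta>"] top by simp
  show "cdual sc D t \<subseteq> T closure_of fspan \<zeta>"
  proof
    fix \<Psi> assume \<Psi>: "\<Psi> \<in> cdual sc D t"
    show "\<Psi> \<in> T closure_of fspan \<zeta>"
    proof (rule ccontr)
      assume "\<Psi> \<notin> T closure_of fspan \<zeta>"
      moreover have "fspan \<zeta> \<subseteq> E"
        unfolding top using \<zeta> by (intro fspan_subset fzero_in_cdual fadd_in_cdual fscale_in_cdual)
      moreover have "\<Psi> \<in> E" using \<Psi> top by simp
      ultimately obtain L where L_add: "\<And>x y. x \<in> E \<Longrightarrow> y \<in> E \<Longrightarrow> L (fadd x y) = L x + L y"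
        and L_scale: "\<And>c x. x \<in> E \<Longrightarrow> L (fscale c x) = c * L x"
        and L_cont: "continuous_map T euclidean L" and L_span: "\<And>m. m \<in> fspan \<zeta> \<Longrightarrow> L m = 0"
        and "L \<Psi> \<noteq> 0"
        using separation_subspace[OF _ fzero_in_fspan fadd_in_fspan fscale_in_fspan] by blast
      have "\<exists>g\<in>D. \<forall>\<Phi>\<in>cdual sc D t. L \<Phi> = \<Phi> g"
        using L_add L_scale L_cont top by (intro evaluation) simp
      then obtain g where "g \<in> D" and g: "\<And>\<Phi>. \<Phi> \<in> cdual sc D t \<Longrightarrow> L \<Phi> = \<Phi> g"
        by blast
      have "\<zeta> k g = 0" for k
        using L_span[OF in_fspan] g[OF \<zeta>] by simp
      then have "(\<lambda>k. \<Psi> (\<xi> k) * \<zeta> k g) sums 0" by simp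
      moreover have "(\<lambda>k. \<Psi> (\<xi> k) * \<zeta> k g) sums \<Psi> g"
        using cdual_expansion[OF rhs \<xi> expansion \<Psi> \<open>g \<in> D\<close>] .
      ultimately have "0 = \<Psi> g" by (rule sums_unique2)
      then show False using g[OF \<Psi>] \<open>L \<Psi> \<noteq> 0\<close> by simp
    qed
  qed
qed

section \<open>Topologies on the conjugate dual\<close>

lemma lctvs_imp_lc_function_space:
  assumes "lctvs fadd fscale fzero T"
  shows "lc_function_space T"
proof -
  have add: "continuous_map (prod_topology T T) T (\<lambda>(x, y). fadd x y)"
    and scale: "continuous_map (prod_topology euclidean T) T (\<lambda>(c, x). fscale c x)"
    using assms unfolding lctvs_def by blast+
  show ?thesis
  proof
    fix a assume "a \<in> topspace T"
    then have "continuous_map T (prod_topology T T) (\<lambda>x. (a, x))"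
      by (intro continuous_map_pairedI) auto
    from continuous_map_compose[OF this add] show "continuous_map T T (fadd a)"
      by (simp add: o_def)
  next
    fix c :: complex
    have "continuous_map T (prod_topology euclidean T) (\<lambda>x. (c, x))"
      by (intro continuous_map_pairedI) auto
    from continuous_map_compose[OF this scale] show "continuous_map T T (fscale c)"
      by (simp add: o_def)
  next
    fix x assume "x \<in> topspace T"
    then have "continuous_map euclidean (prod_topology euclidean T) (\<lambda>c::complex. (c, x))"
      by (intro continuous_map_pairedI) auto
    from continuous_map_compose[OF this scale] show "continuous_map euclidean T (\<lambda>c. fscale c x)"
      by (simp add: o_def)
  qed (use assms in \<open>auto simp: lctvs_def\<close>)
qed

lemma compatible_topD:
  assumes "compatible_top sc D t \<tau>"
  shows "lc_function_space \<tau>" "topspace \<tau> = cdual sc D t"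
    and "(\<forall>\<Phi>\<in>cdual sc D t. \<forall>\<Psi>\<in>cdual sc D t. L (fadd \<Phi> \<Psi>) = L \<Phi> + L \<Psi>) \<and>
      (\<forall>c. \<forall>\<Phi>\<in>cdual sc D t. L (fscale c \<Phi>) = c * L \<Phi>) \<and> continuous_map \<tau> euclidean L \<Longrightarrow>
      \<exists>g\<in>D. \<forall>\<Phi>\<in>cdual sc D t. L \<Phi> = \<Phi> g"
  using assms lctvs_imp_lc_function_space unfolding compatible_top_def by blast+

lemma tvs_bounded_Un:
  assumes "tvs_bounded sc z T B1" "tvs_bounded sc z T B2"
  shows "tvs_bounded sc z T (B1 \<union> B2)"
proof -
  have "\<exists>s>0. \<forall>r::real. r > s \<longrightarrow> B1 \<union> B2 \<subseteq> sc (complex_of_real r) ` U"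
    if U: "openin T U \<and> z \<in> U" for U
  proof -
    obtain s1 where "s1 > 0" "\<forall>r::real. r > s1 \<longrightarrow> B1 \<subseteq> sc (complex_of_real r) ` U"
      using assms(1) U unfolding tvs_bounded_def by blast
    moreover obtain s2 where "s2 > 0" "\<forall>r::real. r > s2 \<longrightarrow> B2 \<subseteq> sc (complex_of_real r) ` U"
      using assms(2) U unfolding tvs_bounded_def by blast
    ultimately show ?thesis by (intro exI[of _ "max s1 s2"]) auto
  qed
  moreover have "B1 \<union> B2 \<subseteq> topspace T" using assms unfolding tvs_bounded_def by blast
  ultimately show ?thesis unfolding tvs_bounded_def by blast
qed

lemma tvs_bounded_empty: "tvs_bounded sc z T {}"
  unfolding tvs_bounded_def by (intro conjI allI impI exI[of _ "1::real"]) auto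

lemma openin_unif_top:
  assumes "\<forall>B1\<in>BS. \<forall>B2\<in>BS. B1 \<union> B2 \<in> BS"
  shows "openin (unif_top X BS ev) U \<longleftrightarrow> U \<subseteq> X \<and>
     (\<forall>x\<in>U. \<exists>B\<in>BS. \<exists>e>0. {z\<in>X. \<forall>y\<in>B. cmod (ev z y - ev x y) < e} \<subseteq> U)"
proof -
  let ?nbhd = "\<lambda>x B e. {z\<in>X. \<forall>y\<in>B. cmod (ev z y - ev x y) < e}"
  let ?P = "\<lambda>U. U \<subseteq> X \<and> (\<forall>x\<in>U. \<exists>B\<in>BS. \<exists>e>0. ?nbhd x B e \<subseteq> U)"
  have "istopology ?P"
    unfolding istopology_def
  proof (rule conjI; intro allI impI)
    fix S S' assume S: "?P S" and S': "?P S'"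
    show "?P (S \<inter> S')"
    proof (intro conjI ballI)
      show "S \<inter> S' \<subseteq> X" using S by blast
      fix x assume x: "x \<in> S \<inter> S'"
      obtain B1 e1 where "B1 \<in> BS" "e1 > 0" "?nbhd x B1 e1 \<subseteq> S"
        using S x by blast
      moreover obtain B2 e2 where "B2 \<in> BS" "e2 > 0" "?nbhd x B2 e2 \<subseteq> S'"
        using S' x by blast
      moreover have "?nbhd x (B1 \<union> B2) (min e1 e2) \<subseteq> ?nbhd x B1 e1 \<inter> ?nbhd x B2 e2"
        by auto
      ultimately show "\<exists>B\<in>BS. \<exists>e>0. ?nbhd x B e \<subseteq> S \<inter> S'"
        using assms by (intro bexI[of _ "B1 \<union> B2"] exI[of _ "min e1 e2"]) auto
    qed
  next
    fix K assume K: "\<forall>S\<in>K. ?P S"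
    show "?P (\<Union>K)"
    proof (intro conjI ballI)
      show "\<Union>K \<subseteq> X" using K by blast
      fix x assume "x \<in> \<Union>K"
      then obtain S where S: "S \<in> K" "x \<in> S" by blast
      then obtain B e where "B \<in> BS" "e > 0" "?nbhd x B e \<subseteq> S"
        using K by blast
      then show "\<exists>B\<in>BS. \<exists>e>0. ?nbhd x B e \<subseteq> \<Union>K"
        using S(1) by blast
    qed
  qed
  then show ?thesis unfolding unif_top_def by simp
qed

lemma topspace_unif_top:
  assumes "\<forall>B1\<in>BS. \<forall>B2\<in>BS. B1 \<union> B2 \<in> BS" "{} \<in> BS"
  shows "topspace (unif_top X BS ev) = X"
proof
  show "topspace (unif_top X BS ev) \<subseteq> X"
  proof
    fix x assume "x \<in> topspace (unif_top X BS ev)"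
    then obtain S where "openin (unif_top X BS ev) S" "x \<in> S" unfolding topspace_def by blast
    then show "x \<in> X" using openin_unif_top[OF assms(1), of X ev S] by blast
  qed
  have "openin (unif_top X BS ev) X"
  proof (subst openin_unif_top[OF assms(1)], intro conjI ballI)
    show "\<exists>B\<in>BS. \<exists>e>0. {z \<in> X. \<forall>y\<in>B. cmod (ev z y - ev x y) < e} \<subseteq> X" for x
      using assms(2) by (intro bexI[of _ "{}"] exI[of _ "1::real"]) auto
  qed simp
  then show "X \<subseteq> topspace (unif_top X BS ev)" by (rule openin_subset)
qed

lemma openin_strong_dual_top:
  "openin (strong_dual_top sc D t) U \<longleftrightarrow> U \<subseteq> cdual sc D t \<and>
     (\<forall>x\<in>U. \<exists>B. tvs_bounded sc 0 t B \<and>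
        (\<exists>e>0. {z\<in>cdual sc D t. \<forall>y\<in>B. cmod (z y - x y) < e} \<subseteq> U))"
  unfolding strong_dual_top_def by (subst openin_unif_top) (simp_all add: tvs_bounded_Un)

lemma topspace_strong_dual_top: "topspace (strong_dual_top sc D t) = cdual sc D t"
  unfolding strong_dual_top_def
  by (rule topspace_unif_top) (simp_all add: tvs_bounded_Un tvs_bounded_empty)

lemma cdual_bounded_on_tvs_bounded:
  assumes rhs: "rigged_hilbert_space sc ip D t" and \<Phi>: "\<Phi> \<in> cdual sc D t"
    and B: "tvs_bounded sc 0 t B"
  obtains K where "K > 0" "\<And>y. y \<in> B \<Longrightarrow> cmod (\<Phi> y) \<le> K"
proof -
  have "topspace t = D" using rhs unfolding rigged_hilbert_space_def by blast
  have cont: "continuous_map t euclidean \<Phi>" and scale: "\<And>c x. x \<in> D \<Longrightarrow> \<Phi> (sc c x) = cnj c * \<Phi> x"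
    using \<Phi> unfolding cdual_def by blast+
  define U where "U = {x \<in> topspace t. \<Phi> x \<in> ball 0 1}"
  have "openin t U" unfolding U_def by (rule openin_continuous_map_preimage[OF cont]) simp
  moreover have "0 \<in> U"
    unfolding U_def using \<open>topspace t = D\<close> rigged_hilbert_space_subspace(1)[OF rhs]
      cdual_zero[OF \<Phi> rigged_hilbert_space_subspace(1)[OF rhs]] by simp
  ultimately obtain s where "s > 0" and s: "\<forall>r::real. r > s \<longrightarrow> B \<subseteq> sc (complex_of_real r) ` U"
    using B unfolding tvs_bounded_def by blast
  have "B \<subseteq> sc (complex_of_real (s + 1)) ` U" using s[rule_format, of "s + 1"] by simp
  show thesis
  proof
    show "(0::real) < s + 1" using \<open>s > 0\<close> by simp
    fix y assume "y \<in> B"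
    then obtain u where u: "u \<in> U" "y = sc (complex_of_real (s + 1)) u"
      using \<open>B \<subseteq> sc (complex_of_real (s + 1)) ` U\<close> by blast
    then have "u \<in> D" "cmod (\<Phi> u) < 1" using \<open>topspace t = D\<close> unfolding U_def by auto
    then have "cmod (\<Phi> y) = (s + 1) * cmod (\<Phi> u)"
      using u(2) scale \<open>s > 0\<close> by (simp add: norm_mult)
    also have "\<dots> \<le> (s + 1) * 1"
      using \<open>cmod (\<Phi> u) < 1\<close> \<open>s > 0\<close> by (intro mult_left_mono) auto
    finally show "cmod (\<Phi> y) \<le> s + 1" by simp
  qed
qed

lemma continuous_map_strong_dual_top:
  assumes maps_to: "\<And>\<Phi>. \<Phi> \<in> cdual sc D t \<Longrightarrow> g \<Phi> \<in> cdual sc D t"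
    and uniform: "\<And>\<Phi> B e. \<Phi> \<in> cdual sc D t \<Longrightarrow> tvs_bounded sc 0 t B \<Longrightarrow> e > 0 \<Longrightarrow>
       \<exists>e'>0. \<forall>\<Psi>\<in>cdual sc D t. (\<forall>y\<in>B. cmod (\<Psi> y - \<Phi> y) < e') \<longrightarrow> (\<forall>y\<in>B. cmod (g \<Psi> y - g \<Phi> y) < e)"
  shows "continuous_map (strong_dual_top sc D t) (strong_dual_top sc D t) g"
  unfolding continuous_map_def topspace_strong_dual_top
proof (intro conjI allI impI)
  show "g \<in> cdual sc D t \<rightarrow> cdual sc D t" using maps_to by blast
  fix U assume U: "openin (strong_dual_top sc D t) U"
  show "openin (strong_dual_top sc D t) {\<Phi> \<in> cdual sc D t. g \<Phi> \<in> U}"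
    unfolding openin_strong_dual_top
  proof (intro conjI ballI)
    fix \<Phi> assume "\<Phi> \<in> {\<Phi> \<in> cdual sc D t. g \<Phi> \<in> U}"
    then have \<Phi>: "\<Phi> \<in> cdual sc D t" "g \<Phi> \<in> U" by auto
    then obtain B e where B: "tvs_bounded sc 0 t B" "e > 0"
      and ball: "{\<Psi> \<in> cdual sc D t. \<forall>y\<in>B. cmod (\<Psi> y - g \<Phi> y) < e} \<subseteq> U"
      using U unfolding openin_strong_dual_top by blast
    obtain e' where "e' > 0"
      and e': "\<forall>\<Psi>\<in>cdual sc D t. (\<forall>y\<in>B. cmod (\<Psi> y - \<Phi> y) < e') \<longrightarrow> (\<forall>y\<in>B. cmod (g \<Psi> y - g \<Phi> y) < e)"
      using uniform[OF \<Phi>(1) B] by blast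
    have "{\<Psi> \<in> cdual sc D t. \<forall>y\<in>B. cmod (\<Psi> y - \<Phi> y) < e'} \<subseteq> {\<Phi> \<in> cdual sc D t. g \<Phi> \<in> U}"
    proof safe
      fix \<Psi> assume \<Psi>: "\<Psi> \<in> cdual sc D t" "\<forall>y\<in>B. cmod (\<Psi> y - \<Phi> y) < e'"
      then have "\<forall>y\<in>B. cmod (g \<Psi> y - g \<Phi> y) < e" using e' by blast
      then show "g \<Psi> \<in> U" using ball maps_to[OF \<Psi>(1)] by blast
    qed
    then show "\<exists>B. tvs_bounded sc 0 t B \<and>
        (\<exists>e>0. {\<Psi> \<in> cdual sc D t. \<forall>y\<in>B. cmod (\<Psi> y - \<Phi> y) < e} \<subseteq> {\<Phi> \<in> cdual sc D t. g \<Phi> \<in> U})"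
      using B(1) \<open>e' > 0\<close> by blast
  qed blast
qed

lemma continuous_map_fscale_scalar_strong_dual_top:
  assumes rhs: "rigged_hilbert_space sc ip D t" and \<Phi>: "\<Phi> \<in> cdual sc D t"
  shows "continuous_map euclidean (strong_dual_top sc D t) (\<lambda>c. fscale c \<Phi>)"
  unfolding continuous_map_def topspace_strong_dual_top
proof (intro conjI allI impI)
  show "(\<lambda>c. fscale c \<Phi>) \<in> topspace euclidean \<rightarrow> cdual sc D t" using fscale_in_cdual \<Phi> by blast
  fix U assume U: "openin (strong_dual_top sc D t) U"
  have "open {c. fscale c \<Phi> \<in> U}"
  proof (rule open_contains_ball[THEN iffD2], intro ballI)
    fix c0 assume "c0 \<in> {c. fscale c \<Phi> \<in> U}"
    then obtain B e where B: "tvs_bounded sc 0 t B" "e > 0"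
      and ball: "{\<Psi> \<in> cdual sc D t. \<forall>y\<in>B. cmod (\<Psi> y - fscale c0 \<Phi> y) < e} \<subseteq> U"
      using U unfolding openin_strong_dual_top by blast
    obtain K where "K > 0" and K: "\<And>y. y \<in> B \<Longrightarrow> cmod (\<Phi> y) \<le> K"
      using cdual_bounded_on_tvs_bounded[OF rhs \<Phi> B(1)] by blast
    have "fscale c \<Phi> \<in> U" if "dist c0 c < e / K" for c
    proof -
      have "cmod (fscale c \<Phi> y - fscale c0 \<Phi> y) < e" if "y \<in> B" for y
      proof -
        have "cmod (fscale c \<Phi> y - fscale c0 \<Phi> y) = cmod (c - c0) * cmod (\<Phi> y)"
          by (simp add: norm_mult[symmetric] left_diff_distrib)
        also have "\<dots> \<le> cmod (c - c0) * K" using K that by (intro mult_left_mono) auto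
        also have "\<dots> < (e / K) * K"
          using \<open>dist c0 c < e / K\<close> \<open>K > 0\<close> by (intro mult_strict_right_mono) (auto simp: dist_norm norm_minus_commute)
        finally show ?thesis using \<open>K > 0\<close> by simp
      qed
      then show ?thesis using ball fscale_in_cdual[OF \<Phi>] by blast
    qed
    then show "\<exists>e>0. ball c0 e \<subseteq> {c. fscale c \<Phi> \<in> U}"
      using B(2) \<open>K > 0\<close> by (intro exI[of _ "e / K"]) auto
  qed
  then show "openin euclidean {c \<in> topspace euclidean. fscale c \<Phi> \<in> U}" by simp
qed

text \<open>The open ball of radius e for the seminorm sending \<Psi> to the supremum of cmod (\<Psi> y)
  over y \<in> B.\<close>

definition dual_ball :: "(complex \<Rightarrow> 'a::ab_group_add \<Rightarrow> 'a) \<Rightarrow> 'a set \<Rightarrow> 'a topology \<Rightarrow> 'a set \<Rightarrow> real \<Rightarrow> ('a \<Rightarrow> complex) set" where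
  "dual_ball sc D t B e = {\<Psi> \<in> cdual sc D t. \<exists>e'<e. \<forall>y\<in>B. cmod (\<Psi> y) \<le> e'}"

lemma openin_dual_ball:
  assumes "tvs_bounded sc 0 t B"
  shows "openin (strong_dual_top sc D t) (dual_ball sc D t B e)"
  unfolding openin_strong_dual_top
proof (intro conjI ballI)
  fix \<Phi> assume "\<Phi> \<in> dual_ball sc D t B e"
  then obtain e' where \<Phi>: "\<Phi> \<in> cdual sc D t" "e' < e" "\<forall>y\<in>B. cmod (\<Phi> y) \<le> e'"
    unfolding dual_ball_def by blast
  have "{\<Psi> \<in> cdual sc D t. \<forall>y\<in>B. cmod (\<Psi> y - \<Phi> y) < (e - e') / 2} \<subseteq> dual_ball sc D t B e"
  proof
    fix \<Psi> assume \<Psi>: "\<Psi> \<in> {\<Psi> \<in> cdual sc D t. \<forall>y\<in>B. cmod (\<Psi> y - \<Phi> y) < (e - e') / 2}"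
    have "cmod (\<Psi> y) \<le> e' + (e - e') / 2" if "y \<in> B" for y
    proof -
      have "cmod (\<Psi> y) \<le> cmod (\<Phi> y) + cmod (\<Psi> y - \<Phi> y)" by (rule norm_triangle_sub)
      moreover have "cmod (\<Phi> y) \<le> e'" "cmod (\<Psi> y - \<Phi> y) < (e - e') / 2"
        using \<Phi>(3) \<Psi> that by auto
      ultimately show ?thesis by linarith
    qed
    moreover have "e' + (e - e') / 2 < e" using \<Phi>(2) by (simp add: field_simps)
    ultimately show "\<Psi> \<in> dual_ball sc D t B e" unfolding dual_ball_def using \<Psi> by blast
  qed
  then show "\<exists>B'. tvs_bounded sc 0 t B' \<and>
      (\<exists>d>0. {\<Psi> \<in> cdual sc D t. \<forall>y\<in>B'. cmod (\<Psi> y - \<Phi> y) < d} \<subseteq> dual_ball sc D t B e)"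
    using assms \<Phi>(2) by (intro exI[of _ B] conjI exI[of _ "(e - e') / 2"]) auto
qed (unfold dual_ball_def, blast)

lemma convex_dual_ball: "convex_wrt fadd fscale (dual_ball sc D t B e)"
  unfolding convex_wrt_def
proof (intro ballI allI impI)
  fix \<Phi> \<Psi> and u :: real
  assume "\<Phi> \<in> dual_ball sc D t B e" "\<Psi> \<in> dual_ball sc D t B e" and u: "0 \<le> u \<and> u \<le> 1"
  then obtain e1 e2 where \<Phi>: "\<Phi> \<in> cdual sc D t" "e1 < e" "\<forall>y\<in>B. cmod (\<Phi> y) \<le> e1"
    and \<Psi>: "\<Psi> \<in> cdual sc D t" "e2 < e" "\<forall>y\<in>B. cmod (\<Psi> y) \<le> e2"
    unfolding dual_ball_def by blast
  let ?\<Theta> = "fadd (fscale (complex_of_real u) \<Phi>) (fscale (complex_of_real (1 - u)) \<Psi>)"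
  have "cmod (?\<Theta> y) \<le> max e1 e2" if "y \<in> B" for y
  proof -
    have "cmod (?\<Theta> y) \<le> cmod (complex_of_real u * \<Phi> y) + cmod (complex_of_real (1 - u) * \<Psi> y)"
      by (simp add: norm_triangle_ineq)
    also have "\<dots> = u * cmod (\<Phi> y) + (1 - u) * cmod (\<Psi> y)"
      using u by (simp only: norm_mult norm_of_real) simp
    also have "\<dots> \<le> u * max e1 e2 + (1 - u) * max e1 e2"
      using u \<Phi>(3) \<Psi>(3) that by (intro add_mono mult_left_mono) auto
    finally show ?thesis by (simp add: algebra_simps)
  qed
  moreover have "?\<Theta> \<in> cdual sc D t" using fadd_in_cdual fscale_in_cdual \<Phi>(1) \<Psi>(1) by blast
  ultimately show "?\<Theta> \<in> dual_ball sc D t B e"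
    unfolding dual_ball_def using \<Phi>(2) \<Psi>(2) by (intro CollectI conjI exI[of _ "max e1 e2"]) auto
qed

lemma convex_neighbourhood_strong_dual_top:
  assumes U: "openin (strong_dual_top sc D t) U" "fzero \<in> U"
  obtains V where "openin (strong_dual_top sc D t) V" "fzero \<in> V" "V \<subseteq> U"
    "convex_wrt fadd fscale V"
proof -
  obtain B e where B: "tvs_bounded sc 0 t B" "e > 0"
    and ball: "{\<Psi> \<in> cdual sc D t. \<forall>y\<in>B. cmod (\<Psi> y - fzero y) < e} \<subseteq> U"
    using U unfolding openin_strong_dual_top by blast
  show thesis
  proof (rule that[OF openin_dual_ball[OF B(1)] _ _ convex_dual_ball])
    show "fzero \<in> dual_ball sc D t B e"
      unfolding dual_ball_def using fzero_in_cdual B(2) by (intro CollectI conjI exI[of _ 0]) auto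
    show "dual_ball sc D t B e \<subseteq> U"
    proof
      fix \<Psi> assume "\<Psi> \<in> dual_ball sc D t B e"
      then obtain e' where "\<Psi> \<in> cdual sc D t" "e' < e" "\<forall>y\<in>B. cmod (\<Psi> y) \<le> e'"
        unfolding dual_ball_def by blast
      then have "\<Psi> \<in> {\<Psi> \<in> cdual sc D t. \<forall>y\<in>B. cmod (\<Psi> y - fzero y) < e}" by fastforce
      then show "\<Psi> \<in> U" using ball by blast
    qed
  qed
qed

lemma lc_function_space_strong_dual_top:
  fixes sc :: "complex \<Rightarrow> 'a::ab_group_add \<Rightarrow> 'a"
  assumes rhs: "rigged_hilbert_space sc ip D t"
  shows "lc_function_space (strong_dual_top sc D t)"
proof
  show "fzero \<in> topspace (strong_dual_top sc D t)"
    unfolding topspace_strong_dual_top by (rule fzero_in_cdual)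
  show "continuous_map (strong_dual_top sc D t) (strong_dual_top sc D t) (fadd \<Phi>)"
    if "\<Phi> \<in> topspace (strong_dual_top sc D t)" for \<Phi>
    using that unfolding topspace_strong_dual_top
    by (intro continuous_map_strong_dual_top fadd_in_cdual) auto
  show "continuous_map (strong_dual_top sc D t) (strong_dual_top sc D t) (fscale c)" for c
  proof (rule continuous_map_strong_dual_top[OF fscale_in_cdual])
    fix \<Phi> :: "'a \<Rightarrow> complex" and B :: "'a set" and e :: real assume "e > 0"
    have "cmod c + 1 > 0" by (simp add: add_nonneg_pos)
    moreover have "cmod (fscale c \<Psi> y - fscale c \<Phi> y) < e"
      if "cmod (\<Psi> y - \<Phi> y) < e / (cmod c + 1)" for \<Psi> y
    proof -
      have "cmod (fscale c \<Psi> y - fscale c \<Phi> y) = cmod c * cmod (\<Psi> y - \<Phi> y)"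
        by (simp add: norm_mult[symmetric] right_diff_distrib)
      also have "\<dots> \<le> (cmod c + 1) * cmod (\<Psi> y - \<Phi> y)" by (simp add: distrib_right)
      also have "\<dots> < (cmod c + 1) * (e / (cmod c + 1))"
        using that \<open>cmod c + 1 > 0\<close> by (intro mult_strict_left_mono) auto
      finally show ?thesis using \<open>cmod c + 1 > 0\<close> by simp
    qed
    ultimately show "\<exists>e'>0. \<forall>\<Psi>\<in>cdual sc D t. (\<forall>y\<in>B. cmod (\<Psi> y - \<Phi> y) < e') \<longrightarrow>
        (\<forall>y\<in>B. cmod (fscale c \<Psi> y - fscale c \<Phi> y) < e)"
      using \<open>e > 0\<close> by (intro exI[of _ "e / (cmod c + 1)"]) auto
  qed
  show "continuous_map euclidean (strong_dual_top sc D t) (\<lambda>c. fscale c \<Phi>)"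
    if "\<Phi> \<in> topspace (strong_dual_top sc D t)" for \<Phi>
    using that unfolding topspace_strong_dual_top
    by (rule continuous_map_fscale_scalar_strong_dual_top[OF rhs])
  show "\<exists>V. openin (strong_dual_top sc D t) V \<and> fzero \<in> V \<and> V \<subseteq> U \<and> convex_wrt fadd fscale V"
    if "openin (strong_dual_top sc D t) U" "fzero \<in> U" for U
    using convex_neighbourhood_strong_dual_top[OF that] by blast
qed

lemma reflexive_space_evaluation:
  assumes "reflexive_space sc D t"
    and L: "(\<forall>\<Phi>\<in>cdual sc D t. \<forall>\<Psi>\<in>cdual sc D t. L (fadd \<Phi> \<Psi>) = L \<Phi> + L \<Psi>) \<and>
      (\<forall>c. \<forall>\<Phi>\<in>cdual sc D t. L (fscale c \<Phi>) = c * L \<Phi>) \<and>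
      continuous_map (strong_dual_top sc D t) euclidean L"
  shows "\<exists>g\<in>D. \<forall>\<Phi>\<in>cdual sc D t. L \<Phi> = \<Phi> g"
proof -
  have add: "\<And>\<Phi> \<Psi>. \<Phi> \<in> cdual sc D t \<Longrightarrow> \<Psi> \<in> cdual sc D t \<Longrightarrow> L (fadd \<Phi> \<Psi>) = L \<Phi> + L \<Psi>"
    and scale: "\<And>c \<Phi>. \<Phi> \<in> cdual sc D t \<Longrightarrow> L (fscale c \<Phi>) = c * L \<Phi>"
    and cont: "continuous_map (strong_dual_top sc D t) euclidean L"
    using L by blast+
  define L' where "L' \<Phi> = (if \<Phi> \<in> cdual sc D t then L \<Phi> else 0)" for \<Phi>
  have "L' \<in> bidual sc D t"
    unfolding bidual_def
  proof (intro CollectI conjI ballI allI impI)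
    show "L' (fadd \<Phi> \<Psi>) = L' \<Phi> + L' \<Psi>" if "\<Phi> \<in> cdual sc D t" "\<Psi> \<in> cdual sc D t" for \<Phi> \<Psi>
      unfolding L'_def using add[OF that] fadd_in_cdual[OF that] that by simp
    show "L' (fscale c \<Phi>) = c * L' \<Phi>" if "\<Phi> \<in> cdual sc D t" for c \<Phi>
      unfolding L'_def using scale[OF that] fscale_in_cdual[OF that] that by simp
    show "continuous_map (strong_dual_top sc D t) euclidean L'"
      by (rule continuous_map_eq[OF cont]) (simp add: L'_def topspace_strong_dual_top)
  qed (simp add: L'_def)
  moreover have "bij_betw (canon sc D t) D (bidual sc D t)"
    using assms(1) unfolding reflexive_space_def by blast
  ultimately have "L' \<in> canon sc D t ` D" using bij_betw_imp_surj_on by blast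
  then obtain g where "g \<in> D" and g: "canon sc D t g = L'" by blast
  have "L \<Phi> = \<Phi> g" if "\<Phi> \<in> cdual sc D t" for \<Phi>
  proof -
    have "L \<Phi> = L' \<Phi>" unfolding L'_def using that by simp
    also have "\<dots> = canon sc D t g \<Phi>" using g by simp
    also have "\<dots> = \<Phi> g" unfolding canon_def using that by simp
    finally show ?thesis .
  qed
  then show ?thesis using \<open>g \<in> D\<close> by blast
qed

theorem proposition2p8:
  fixes sc :: "complex \<Rightarrow> 'a::ab_group_add \<Rightarrow> 'a"
    and ip :: "'a \<Rightarrow> 'a \<Rightarrow> complex"
    and D :: "'a set" and t :: "'a topology"
    and \<xi> :: "nat \<Rightarrow> 'a" and \<zeta> :: "nat \<Rightarrow> 'a \<Rightarrow> complex"
  assumes rhs: "rigged_hilbert_space sc ip D t"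
    and basis: "schauder_basis sc D t \<xi>"
    and zeta_dual: "\<forall>n. \<zeta> n \<in> cdual sc D t"
    and expansion: "\<forall>f\<in>D. limitin t (\<lambda>N. \<Sum>n<N. sc (cnj (\<zeta> n f)) (\<xi> n)) f sequentially"
  shows "(\<forall>\<tau>. compatible_top sc D t \<tau> \<longrightarrow> \<tau> closure_of fspan \<zeta> = cdual sc D t)
       \<and> (reflexive_space sc D t \<longrightarrow>
            strong_dual_top sc D t closure_of fspan \<zeta> = cdual sc D t)
       \<and> (\<forall>\<Psi>\<in>cdual sc D t. \<forall>f\<in>D. (\<lambda>k. \<Psi> (\<xi> k) * \<zeta> k f) sums \<Psi> f)"
proof (intro conjI allI impI ballI)
  have \<xi>: "\<And>n. \<xi> n \<in> D" using basis unfolding schauder_basis_def by blast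
  note density = closure_fspan_eq_cdual[OF _ _ rhs \<xi> zeta_dual[rule_format] expansion]
  show "\<tau> closure_of fspan \<zeta> = cdual sc D t" if "compatible_top sc D t \<tau>" for \<tau>
    by (rule density[OF compatible_topD[OF that]])
  show "strong_dual_top sc D t closure_of fspan \<zeta> = cdual sc D t" if "reflexive_space sc D t"
    by (rule density[OF lc_function_space_strong_dual_top[OF rhs] topspace_strong_dual_top
        reflexive_space_evaluation[OF that]])
  show "(\<lambda>k. \<Psi> (\<xi> k) * \<zeta> k f) sums \<Psi> f" if "\<Psi> \<in> cdual sc D t" "f \<in> D" for \<Psi> f
    using cdual_expansion[OF rhs \<xi> expansion that] .
qed

end
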